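(* (a) The set $D(h)$ is uncountable, perfect, nowhere dense, has Lebesgue measure zero, and is a self-similar fractal whose Hausdorff dimension $\alpha_0$ is the solution of $$\sum_{p\in\{1,2,\ldots,q-1\},\,p\ne u}\left(\frac1q\right)^{p\alpha_0}=1.$$ (b) The set $E(h)=\{\Delta^{-q}_{\alpha_1\alpha_2\ldots}:\alpha_n\in\Theta\}$ is a self-similar fractal with Hausdorff dimension $\log_q|\Theta|$. (c) Consequently $h$ does not preserve Hausdorff dimension: $\dim_H D(h)\ne\dim_H E(h)$.
   Context: Let $q>3$ be an integer, fix $u\in\{0,1,\ldots,q-1\}$, and put $\Theta=\{1,2,\ldots,q-1\}\setminus\{u\}$. The nega-$q$-ary representation is $\Delta^{-q}_{\beta_1\beta_2\ldots}=\sum_{k\ge1}\frac{\beta_k}{(-q)^k}$, $\beta_k\in\{0,\ldots,q-1\}$. For a sequence $(\alpha_n)_{n\ge1}$ with $\alpha_n\in\Theta$, let $x((\alpha_n))$ be the number whose nega-$q$-ary digit string is the concatenation of the blocks $\underbrace{u\ldots u}_{\alpha_n-1}\alpha_n$ ($\alpha_n-1$ copies of $u$ followed by the digit $\alpha_n$), $n=1,2,\ldots$; equivalently $x=-\frac{u}{q+1}+\sum_{n\ge1}\frac{\alpha_n-u}{(-q)^{\alpha_1+\cdots+\alpha_n}}$. Let $D(h)$ be the set of all such $x$, and define $h:D(h)\to\mathbb R$ by $h(x)=\Delta^{-q}_{\alpha_1\alpha_2\ldots}=\sum_{n\ge1}\frac{\alpha_n}{(-q)^n}$. $E(h)$ denotes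 the range of $h$ and $|\Theta|$ the number of elements of $\Theta$. *)

theory Defs
  imports "HOL-Analysis.Analysis"
begin

(* Nega-q-ary representation: digits beta 0, beta 1, ... stand for beta_1, beta_2, ... *)
definition negaq :: "nat \<Rightarrow> (nat \<Rightarrow> nat) \<Rightarrow> real" where
  "negaq q \<beta> = (\<Sum>k. real (\<beta> k) / (- real q) ^ (Suc k))"

definition Theta :: "nat \<Rightarrow> nat \<Rightarrow> nat set" where
  "Theta q u = {1..q-1} - {u}"

(* partial sums S n = alpha_1 + ... + alpha_n (alpha 0 stands for alpha_1) *)
definition psum :: "(nat \<Rightarrow> nat) \<Rightarrow> nat \<Rightarrow> nat" where
  "psum \<alpha> n = (\<Sum>i<n. \<alpha> i)"

(* Concatenation of the blocks  u...u (alpha_n - 1 times) alpha_n :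
   the digit in (1-based) position k+1 is alpha_n if k+1 = alpha_1+...+alpha_n, else u *)
definition blockdigits :: "nat \<Rightarrow> (nat \<Rightarrow> nat) \<Rightarrow> nat \<Rightarrow> nat" where
  "blockdigits u \<alpha> k =
     (if \<exists>n. Suc k = psum \<alpha> (Suc n) then \<alpha> (THE n. Suc k = psum \<alpha> (Suc n)) else u)"

definition Dh :: "nat \<Rightarrow> nat \<Rightarrow> real set" where
  "Dh q u = {negaq q (blockdigits u \<alpha>) | \<alpha>. \<forall>n. \<alpha> n \<in> Theta q u}"

definition Eh :: "nat \<Rightarrow> nat \<Rightarrow> real set" where
  "Eh q u = {negaq q \<alpha> | \<alpha>. \<forall>n. \<alpha> n \<in> Theta q u}"

definition hdiam :: "real \<Rightarrow> real set \<Rightarrow> real" where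
  "hdiam s U = (if U = {} then 0 else if s = 0 then 1 else diameter U powr s)"

definition hausdorff_pre :: "real \<Rightarrow> real \<Rightarrow> real set \<Rightarrow> ennreal" where
  "hausdorff_pre s \<delta> A =
     (INF U \<in> {U :: nat \<Rightarrow> real set. (\<forall>i. bounded (U i) \<and> diameter (U i) \<le> \<delta>)
                                   \<and> A \<subseteq> (\<Union>i. U i)}.
        (\<Sum>i. ennreal (hdiam s (U i))))"

definition hausdorff_measure :: "real \<Rightarrow> real set \<Rightarrow> ennreal" where
  "hausdorff_measure s A = (SUP \<delta> \<in> {0<..}. hausdorff_pre s \<delta> A)"

definition hausdorff_dim :: "real set \<Rightarrow> real" where
  "hausdorff_dim A = Inf {s. s \<ge> 0 \<and> hausdorff_measure s A = 0}"

definition perfect_set :: "real set \<Rightarrow> bool" where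
  "perfect_set S \<longleftrightarrow> closed S \<and> (\<forall>x\<in>S. x islimpt S)"

definition nowhere_dense :: "real set \<Rightarrow> bool" where
  "nowhere_dense S \<longleftrightarrow> interior (closure S) = {}"

definition similarity_contraction :: "(real \<Rightarrow> real) \<Rightarrow> bool" where
  "similarity_contraction f \<longleftrightarrow> (\<exists>r. 0 < r \<and> r < 1 \<and> (\<forall>x y. dist (f x) (f y) = r * dist x y))"

definition self_similar :: "real set \<Rightarrow> bool" where
  "self_similar K \<longleftrightarrow> compact K \<and> K \<noteq> {} \<and>
     (\<exists>F. finite F \<and> F \<noteq> {} \<and> (\<forall>f\<in>F. similarity_contraction f) \<and> K = (\<Union>f\<in>F. f ` K))"

end

theory Submission
  imports Defs
begin

text \<open>Both sets are attractors of finitely many contracting similarities of the line: \<open>E(h)\<close> of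
  \<open>x \<mapsto> (a + x) / (-q)\<close> and \<open>D(h)\<close> of \<open>x \<mapsto> v\<^sub>a + (-1/q)\<^sup>a x\<close>, where \<open>v\<^sub>a\<close> is the value of the block
  \<open>u\<dots>u a\<close>, for \<open>a \<in> \<Theta>\<close>. The extremal nega-q-ary expansions \<open>0 (q-1) 0 (q-1)\<dots>\<close> and
  \<open>(q-1) 0 (q-1) 0\<dots>\<close> never occur as tails of these digit sequences, so sequences with different
  first letters are mapped a fixed distance apart (strong separation). For such an attractor the
  Hausdorff dimension is the solution \<open>s\<close> of Moran's equation \<open>\<Sum> r\<^sub>a\<^sup>s = 1\<close>: cylinders give the
  upper bound, and comparing a finite cover by balls with a prefix code gives the lower bound; a
  ratio sum below \<open>1\<close> makes the attractor Lebesgue null. The ratios \<open>(1/q)\<^sup>a\<close> of \<open>D(h)\<close> are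
  smaller than the ratio \<open>1/q\<close> of \<open>E(h)\<close>, strictly so for \<open>a \<ge> 2\<close>, hence
  \<open>dim D(h) < log\<^sub>q |\<Theta>| = dim E(h)\<close>.\<close>

section \<open>Infinite words over an alphabet\<close>

definition stake :: "nat \<Rightarrow> (nat \<Rightarrow> 'a) \<Rightarrow> 'a list" where
  "stake n \<alpha> = map \<alpha> [0..<n]"

lemma length_stake [simp]: "length (stake n \<alpha>) = n"
  by (simp add: stake_def)

lemma stake_eq_iff: "stake n \<alpha> = stake n \<beta> \<longleftrightarrow> (\<forall>i<n. \<alpha> i = \<beta> i)"
  by (auto simp: stake_def)

lemma stake_Suc: "stake (Suc n) \<alpha> = stake n \<alpha> @ [\<alpha> n]"
  by (simp add: stake_def)

lemma stake_Suc_case_nat [simp]: "stake (Suc n) (case_nat a \<alpha>) = a # stake n \<alpha>"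
  by (simp add: stake_def map_upt_Suc del: upt_Suc)

lemma first_difference:
  assumes "\<alpha> \<noteq> \<beta>"
  obtains n where "stake n \<alpha> = stake n \<beta>" "\<alpha> n \<noteq> \<beta> n"
proof -
  define n where "n = (LEAST n. \<alpha> n \<noteq> \<beta> n)"
  have ex: "\<exists>n. \<alpha> n \<noteq> \<beta> n" using assms by auto
  have "\<alpha> n \<noteq> \<beta> n" unfolding n_def by (rule LeastI_ex[OF ex])
  moreover have "stake n \<alpha> = stake n \<beta>"
    unfolding n_def stake_eq_iff using not_less_Least by blast
  ultimately show ?thesis using that by blast
qed

definition prepend :: "'a list \<Rightarrow> (nat \<Rightarrow> 'a) \<Rightarrow> nat \<Rightarrow> 'a" where
  "prepend w \<alpha> = (\<lambda>n. if n < length w then w ! n else \<alpha> (n - length w))"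

lemma prepend_Nil [simp]: "prepend [] \<alpha> = \<alpha>"
  by (simp add: prepend_def)

lemma prepend_Cons: "prepend (a # w) \<alpha> = case_nat a (prepend w \<alpha>)"
  by (auto simp: prepend_def fun_eq_iff split: nat.split)

lemma prepend_stake_shift: "prepend (stake n \<alpha>) (\<lambda>i. \<alpha> (i + n)) = \<alpha>"
  by (auto simp: prepend_def stake_def fun_eq_iff)

lemma prepend_shift [simp]: "(\<lambda>k. prepend w \<alpha> (k + length w)) = \<alpha>"
  by (simp add: prepend_def)

lemma prepend_nth [simp]: "k < length w \<Longrightarrow> prepend w \<alpha> k = w ! k"
  by (simp add: prepend_def)

lemma case_nat_head_tail: "case_nat (\<alpha> 0) (\<lambda>n. \<alpha> (Suc n)) = \<alpha>"
  by (auto simp: fun_eq_iff split: nat.split)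

definition codes :: "'a set \<Rightarrow> (nat \<Rightarrow> 'a) set" where
  "codes A = {\<alpha>. \<forall>n. \<alpha> n \<in> A}"

lemma codes_case_nat: "a \<in> A \<Longrightarrow> \<alpha> \<in> codes A \<Longrightarrow> case_nat a \<alpha> \<in> codes A"
  by (auto simp: codes_def split: nat.split)

lemma codes_prepend: "set w \<subseteq> A \<Longrightarrow> \<alpha> \<in> codes A \<Longrightarrow> prepend w \<alpha> \<in> codes A"
  by (induction w) (auto simp: prepend_Cons intro!: codes_case_nat)

lemma codes_shift: "\<alpha> \<in> codes A \<Longrightarrow> (\<lambda>i. \<alpha> (i + n)) \<in> codes A"
  by (auto simp: codes_def)

lemma set_stake_codes: "\<alpha> \<in> codes A \<Longrightarrow> set (stake n \<alpha>) \<subseteq> A"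
  by (auto simp: codes_def stake_def)

lemma codes_nonempty: "A \<noteq> {} \<Longrightarrow> codes A \<noteq> {}"
  by (auto simp: codes_def)

lemma compact_codes:
  fixes A :: "'a::topological_space set"
  assumes "finite A"
  shows "compact (codes A)"
proof -
  have "codes A = PiE UNIV (\<lambda>_. A)"
    by (auto simp: codes_def PiE_def extensional_def)
  moreover have "compactin (product_topology (\<lambda>_. euclidean) UNIV) (PiE UNIV (\<lambda>_::nat. A))"
    by (simp add: compactin_PiE finite_imp_compact assms)
  ultimately show ?thesis by (simp add: euclidean_product_topology)
qed

lemma uncountable_codes:
  assumes "a \<in> A" "b \<in> A" "a \<noteq> b"
  shows "uncountable (codes A)"
proof
  assume "countable (codes A)"
  moreover have "codes A \<noteq> {}" using assms codes_nonempty by blast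
  ultimately have range: "range (from_nat_into (codes A)) = codes A"
    by (rule range_from_nat_into[rotated])
  define \<delta> where "\<delta> = (\<lambda>n. if from_nat_into (codes A) n n = a then b else a)"
  have "\<delta> \<in> codes A" using assms by (auto simp: \<delta>_def codes_def)
  then obtain m where "\<delta> = from_nat_into (codes A) m" using range by (metis rangeE)
  then show False using assms by (metis \<delta>_def)
qed

lemma sum_prod_list_lists_length:
  fixes f :: "'a \<Rightarrow> 'b::comm_semiring_1"
  assumes "finite A"
  shows "(\<Sum>w\<in>{w. set w \<subseteq> A \<and> length w = n}. prod_list (map f w)) = (\<Sum>a\<in>A. f a) ^ n"
proof (induction n)
  case 0
  have "{w. set w \<subseteq> A \<and> length w = 0} = {[]}" by auto
  then show ?case by simp
next
  case (Suc n)
  have "(\<Sum>w\<in>{w. set w \<subseteq> A \<and> length w = Suc n}. prod_list (map f w))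
      = (\<Sum>(w, a)\<in>{w. set w \<subseteq> A \<and> length w = n} \<times> A. f a * prod_list (map f w))"
    unfolding lists_length_Suc_eq by (subst sum.reindex[OF inj_split_Cons]) (simp add: split_def)
  also have "\<dots> = (\<Sum>w\<in>{w. set w \<subseteq> A \<and> length w = n}. (\<Sum>a\<in>A. f a) * prod_list (map f w))"
    by (simp add: sum.cartesian_product[symmetric] sum_distrib_right)
  also have "\<dots> = (\<Sum>w\<in>{w. set w \<subseteq> A \<and> length w = n}. prod_list (map f w)) * (\<Sum>a\<in>A. f a)"
    by (simp add: sum_distrib_left mult.commute)
  finally show ?case using Suc by (simp add: mult.commute)
qed

lemma sum_prod_list_ge_first_letter:
  fixes f :: "'a \<Rightarrow> real"
  assumes f: "\<And>a. 0 \<le> f a" and A: "finite A" and W: "finite W"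
  shows "(\<Sum>a\<in>A. f a * (\<Sum>v\<in>Cons a -` W. prod_list (map f v))) \<le> (\<Sum>w\<in>W. prod_list (map f w))"
proof -
  have finite_V: "finite (Cons a -` W)" for a using W by (intro finite_vimageI) auto
  have "(\<Sum>a\<in>A. f a * (\<Sum>v\<in>Cons a -` W. prod_list (map f v)))
      = (\<Sum>(a, v)\<in>Sigma A (\<lambda>a. Cons a -` W). prod_list (map f (a # v)))"
    using A finite_V by (simp add: sum.Sigma sum_distrib_left)
  also have "\<dots> = (\<Sum>w\<in>(\<lambda>(a, v). a # v) ` Sigma A (\<lambda>a. Cons a -` W). prod_list (map f w))"
    by (subst sum.reindex) (auto simp: inj_on_def case_prod_beta')
  also have "\<dots> \<le> (\<Sum>w\<in>W. prod_list (map f w))"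
    using W f by (intro sum_mono2 prod_list_nonneg) auto
  finally show ?thesis .
qed

lemma prefix_cover_vimage_Cons:
  assumes cover: "\<forall>\<alpha>\<in>codes A. \<exists>w\<in>W. stake (length w) \<alpha> = w" and "[] \<notin> W" and a: "a \<in> A"
  shows "\<forall>\<alpha>\<in>codes A. \<exists>v\<in>Cons a -` W. stake (length v) \<alpha> = v"
proof
  fix \<alpha> assume "\<alpha> \<in> codes A"
  then obtain w where w: "w \<in> W" "stake (length w) (case_nat a \<alpha>) = w"
    using cover codes_case_nat[OF a] by blast
  with \<open>[] \<notin> W\<close> obtain v where "w = a # v" "stake (length v) \<alpha> = v"
    by (cases w) auto
  then show "\<exists>v\<in>Cons a -` W. stake (length v) \<alpha> = v" using w(1) by auto
qed

text \<open>Split the words by their first letter and induct on the maximal word length.\<close>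

lemma prefix_cover_weight_ge_1:
  fixes f :: "'a \<Rightarrow> real"
  assumes f: "\<And>a. 0 \<le> f a" and sum_f: "1 \<le> (\<Sum>a\<in>A. f a)"
    and W: "finite W" and cover: "\<And>\<alpha>. \<alpha> \<in> codes A \<Longrightarrow> \<exists>w\<in>W. stake (length w) \<alpha> = w"
  shows "1 \<le> (\<Sum>w\<in>W. prod_list (map f w))"
proof -
  have A: "finite A" "A \<noteq> {}" using sum_f by (auto intro: ccontr)
  have nonneg: "0 \<le> prod_list (map f w)" for w using f by (intro prod_list_nonneg) auto
  have nil: "1 \<le> (\<Sum>w\<in>W. prod_list (map f w))" if "[] \<in> W" "finite W" for W
    using member_le_sum[of "[]" W "\<lambda>w. prod_list (map f w)"] that nonneg by simp
  have "1 \<le> (\<Sum>w\<in>W. prod_list (map f w))"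
    if "finite W" "\<forall>w\<in>W. length w \<le> N" "\<forall>\<alpha>\<in>codes A. \<exists>w\<in>W. stake (length w) \<alpha> = w" for N W
    using that
  proof (induction N arbitrary: W)
    case 0
    obtain \<alpha> where "\<alpha> \<in> codes A" using codes_nonempty[OF A(2)] by blast
    with 0 have "[] \<in> W" by force
    then show ?case using 0 nil by blast
  next
    case (Suc N)
    show ?case
    proof (cases "[] \<in> W")
      case True
      then show ?thesis using Suc.prems nil by blast
    next
      case False
      have "1 \<le> (\<Sum>v\<in>Cons a -` W. prod_list (map f v))" if a: "a \<in> A" for a
      proof (rule Suc.IH)
        show "finite (Cons a -` W)" using Suc.prems(1) by (intro finite_vimageI) auto
        show "\<forall>v\<in>Cons a -` W. length v \<le> N" using Suc.prems(2) by auto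
        show "\<forall>\<alpha>\<in>codes A. \<exists>v\<in>Cons a -` W. stake (length v) \<alpha> = v"
          using prefix_cover_vimage_Cons[OF Suc.prems(3) False a] .
      qed
      then have "(\<Sum>a\<in>A. f a) \<le> (\<Sum>a\<in>A. f a * (\<Sum>v\<in>Cons a -` W. prod_list (map f v)))"
        using f by (intro sum_mono) (metis mult_left_mono mult.right_neutral)
      also have "\<dots> \<le> (\<Sum>w\<in>W. prod_list (map f w))"
        using f A(1) Suc.prems(1) by (rule sum_prod_list_ge_first_letter)
      finally show ?thesis using sum_f by linarith
    qed
  qed
  moreover have "\<forall>w\<in>W. length w \<le> Max (length ` W)" using W by simp
  ultimately show ?thesis using W cover by blast
qed

lemma open_stake_eq: "open {\<beta> :: nat \<Rightarrow> 'a::discrete_topology. stake n \<beta> = stake n \<alpha>}"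
proof -
  have "open {\<beta> :: nat \<Rightarrow> 'a. \<forall>i\<in>{..<n}. \<beta> (id i) \<in> {\<alpha> i}}"
    by (rule product_topology_basis') (auto intro: open_discrete)
  moreover have "{\<beta> :: nat \<Rightarrow> 'a. \<forall>i\<in>{..<n}. \<beta> (id i) \<in> {\<alpha> i}} = {\<beta>. stake n \<beta> = stake n \<alpha>}"
    by (auto simp: stake_eq_iff)
  ultimately show ?thesis by simp
qed

section \<open>Hausdorff measure and Lebesgue null sets\<close>

lemma hdiam_nonneg: "0 \<le> hdiam s U"
  by (simp add: hdiam_def)

lemma hausdorff_pre_le_finite_cover:
  assumes "finite F" "0 \<le> \<delta>" "\<And>U. U \<in> F \<Longrightarrow> bounded U \<and> diameter U \<le> \<delta>" "S \<subseteq> \<Union>F"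
  shows "hausdorff_pre s \<delta> S \<le> ennreal (\<Sum>U\<in>F. hdiam s U)"
proof -
  obtain xs where xs: "set xs = F" "distinct xs" using finite_distinct_list[OF assms(1)] by blast
  define V where "V i = (if i < length xs then xs ! i else {})" for i
  have "hausdorff_pre s \<delta> S \<le> (\<Sum>i. ennreal (hdiam s (V i)))"
    unfolding hausdorff_pre_def
  proof (rule INF_lower, safe)
    show "bounded (V i)" "diameter (V i) \<le> \<delta>" for i
      using assms(2,3) xs(1) by (auto simp: V_def)
    show "x \<in> (\<Union>i. V i)" if "x \<in> S" for x
      using that assms(4) xs(1) by (metis UnionE UNIV_I UN_iff V_def in_set_conv_nth subsetD)
  qed
  also have "(\<Sum>i. ennreal (hdiam s (V i))) = (\<Sum>i<length xs. ennreal (hdiam s (V i)))"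
    by (intro suminf_finite) (auto simp: V_def hdiam_def)
  also have "\<dots> = ennreal (\<Sum>i<length xs. hdiam s (xs ! i))"
    by (simp add: V_def hdiam_nonneg sum_ennreal)
  also have "(\<Sum>i<length xs. hdiam s (xs ! i)) = (\<Sum>U\<in>F. hdiam s U)"
    using xs sum_list_distinct_conv_sum_set[of xs "hdiam s"]
    by (simp add: sum_list_sum_nth atLeast0LessThan)
  finally show ?thesis .
qed

lemma hausdorff_measure_0_nonempty:
  assumes "S \<noteq> {}"
  shows "hausdorff_measure 0 S \<noteq> 0"
proof -
  obtain x where x: "x \<in> S" using assms by blast
  have "ennreal 1 \<le> (\<Sum>i. ennreal (hdiam 0 (U i)))" if cover: "S \<subseteq> (\<Union>i. U i)" for U
  proof -
    obtain i where "x \<in> U i" using x cover by blast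
    then have "ennreal 1 = (\<Sum>j\<in>{i}. ennreal (hdiam 0 (U j)))" by (auto simp: hdiam_def)
    also have "\<dots> \<le> (\<Sum>j. ennreal (hdiam 0 (U j)))" by (intro sum_le_suminf) auto
    finally show ?thesis .
  qed
  then have "ennreal 1 \<le> hausdorff_pre 0 1 S"
    unfolding hausdorff_pre_def by (intro INF_greatest) auto
  also have "\<dots> \<le> hausdorff_measure 0 S"
    unfolding hausdorff_measure_def by (intro SUP_upper) auto
  finally show ?thesis by auto
qed

lemma hausdorff_dim_eqI:
  assumes "0 \<le> d"
    and zero: "\<And>s. d < s \<Longrightarrow> hausdorff_measure s S = 0"
    and nonzero: "\<And>s. 0 \<le> s \<Longrightarrow> s < d \<Longrightarrow> hausdorff_measure s S \<noteq> 0"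
  shows "hausdorff_dim S = d"
proof -
  define Z where "Z = {s. s \<ge> 0 \<and> hausdorff_measure s S = 0}"
  have lower: "d \<le> s" if "s \<in> Z" for s
    using that nonzero by (force simp: Z_def)
  have in_Z: "d + e \<in> Z" if "e > 0" for e
    using that zero assms(1) by (simp add: Z_def)
  then have "Inf Z \<le> d + e" if "e > 0" for e
    using that lower by (intro cInf_lower) (auto simp: bdd_below_def)
  then have "Inf Z \<le> d" by (rule field_le_epsilon)
  moreover have "d \<le> Inf Z"
    using in_Z[of 1] lower by (intro cInf_greatest) auto
  ultimately show ?thesis unfolding hausdorff_dim_def Z_def[symmetric] by simp
qed

lemma powr_add_le:
  fixes x y s :: real
  assumes "0 \<le> x" "0 \<le> y" "0 < s"
  shows "(x + y) powr s \<le> 2 powr s * (x powr s + y powr s)"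
proof -
  have "(x + y) powr s \<le> (2 * max x y) powr s"
    using assms by (intro powr_mono2) auto
  also have "\<dots> = 2 powr s * max x y powr s"
    using assms by (simp add: powr_mult)
  also have "max x y powr s \<le> x powr s + y powr s"
    by (cases "x \<le> y") (auto simp: max_def)
  finally show ?thesis by simp
qed

lemma sum_half_powers_le_1: "finite F \<Longrightarrow> (\<Sum>i\<in>F. (1/2::real) ^ Suc i) \<le> 1"
  using sum_le_suminf[OF sums_summable[OF power_half_series], of F] sums_unique[OF power_half_series]
  by simp

lemma finite_ball_cover_enlarging:
  fixes K :: "'a::metric_space set"
  assumes K: "compact K" and cover: "K \<subseteq> (\<Union>i. U i)"
    and U: "\<forall>i. bounded (U i) \<and> diameter (U i) \<le> r" and \<eta>: "\<And>i. 0 < \<eta> i"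
  obtains F x where "finite F" "\<And>i. i \<in> F \<Longrightarrow> x i \<in> K \<and> U i \<noteq> {}"
    "K \<subseteq> (\<Union>i\<in>F. ball (x i) (diameter (U i) + \<eta> i))"
proof -
  define I where "I = {i. U i \<inter> K \<noteq> {}}"
  have "\<forall>i\<in>I. \<exists>y. y \<in> U i \<inter> K" by (auto simp: I_def)
  then obtain x where x: "\<And>i. i \<in> I \<Longrightarrow> x i \<in> U i \<inter> K" by metis
  have "K \<subseteq> (\<Union>i\<in>I. ball (x i) (diameter (U i) + \<eta> i))"
  proof
    fix y assume "y \<in> K"
    then obtain i where i: "y \<in> U i" using cover by blast
    with \<open>y \<in> K\<close> have "i \<in> I" by (auto simp: I_def)
    have "dist (x i) y \<le> diameter (U i)"
      using U i x[OF \<open>i \<in> I\<close>] by (intro diameter_bounded_bound) auto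
    then have "y \<in> ball (x i) (diameter (U i) + \<eta> i)" using \<eta>[of i] by simp
    then show "y \<in> (\<Union>i\<in>I. ball (x i) (diameter (U i) + \<eta> i))" using \<open>i \<in> I\<close> by blast
  qed
  then obtain F where F: "F \<subseteq> I" "finite F" "K \<subseteq> (\<Union>i\<in>F. ball (x i) (diameter (U i) + \<eta> i))"
    using compactE_image[OF K, of I "\<lambda>i. ball (x i) (diameter (U i) + \<eta> i)"] by blast
  show ?thesis
  proof (rule that[OF F(2) _ F(3)])
    show "x i \<in> K \<and> U i \<noteq> {}" if "i \<in> F" for i using that F(1) x[of i] by blast
  qed
qed

lemma small_powr_sequence:
  fixes s \<epsilon> r :: real
  assumes s: "0 < s" and \<epsilon>: "0 < \<epsilon>" and r: "0 < r"
  obtains \<eta> where "\<And>i. 0 < \<eta> i" "\<And>i. \<eta> i \<le> r" "\<And>i. \<eta> i powr s \<le> \<epsilon> * (1/2) ^ Suc i"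
proof
  define \<eta> where "\<eta> i = min ((\<epsilon> * (1/2) ^ Suc i) powr (1 / s)) r" for i
  show "0 < \<eta> i" "\<eta> i \<le> r" for i using \<epsilon> r by (simp_all add: \<eta>_def)
  have "\<eta> i powr s \<le> ((\<epsilon> * (1/2) ^ Suc i) powr (1 / s)) powr s" for i
    using \<open>0 < \<eta> i\<close> s by (intro powr_mono2) (auto simp: \<eta>_def)
  also have "((\<epsilon> * (1/2) ^ Suc i) powr (1 / s)) powr s = \<epsilon> * (1/2) ^ Suc i" for i
    using s \<epsilon> by (simp add: powr_powr)
  finally show "\<eta> i powr s \<le> \<epsilon> * (1/2) ^ Suc i" for i .
qed

text \<open>A lower bound for finite covers of a compact set by balls centred in the set transfers to
  countable covers by small sets: enlarge each set to a ball around one of its points, with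
  summable enlargements, and pass to a finite subcover.\<close>

lemma sum_hdiam_ge_if_ball_covers:
  assumes K: "compact K" and s: "0 < s" and c: "0 < c" and r0: "0 < r0"
    and balls: "\<And>F x r. finite (F :: nat set) \<Longrightarrow> (\<And>i. i \<in> F \<Longrightarrow> x i \<in> K \<and> 0 < r i \<and> r i < r0)
                  \<Longrightarrow> K \<subseteq> (\<Union>i\<in>F. ball (x i) (r i)) \<Longrightarrow> c \<le> (\<Sum>i\<in>F. r i powr s)"
    and U: "\<forall>i. bounded (U i) \<and> diameter (U i) \<le> r0 / 2" "K \<subseteq> (\<Union>i. U i)"
  shows "ennreal (c / (2 * 2 powr s)) \<le> (\<Sum>i. ennreal (hdiam s (U i)))"
proof -
  define \<epsilon> where "\<epsilon> = c / (2 * 2 powr s)"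
  have \<epsilon>: "0 < \<epsilon>" using c by (simp add: \<epsilon>_def)
  obtain \<eta> where \<eta>: "\<And>i. 0 < \<eta> i" "\<And>i. \<eta> i \<le> r0 / 4" "\<And>i. \<eta> i powr s \<le> \<epsilon> * (1/2) ^ Suc i"
    using small_powr_sequence[OF s \<epsilon>, of "r0 / 4"] r0 by auto
  have d: "0 \<le> diameter (U i)" "diameter (U i) \<le> r0 / 2" for i
    using U(1) by (simp_all add: diameter_ge_0)
  obtain F x where F: "finite F" "\<And>i. i \<in> F \<Longrightarrow> x i \<in> K \<and> U i \<noteq> {}"
      "K \<subseteq> (\<Union>i\<in>F. ball (x i) (diameter (U i) + \<eta> i))"
    using finite_ball_cover_enlarging[OF K U(2) U(1), of \<eta>, OF \<eta>(1)] by blast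
  have small: "x i \<in> K \<and> 0 < diameter (U i) + \<eta> i \<and> diameter (U i) + \<eta> i < r0" if "i \<in> F" for i
    using that F(2) d[of i] \<eta>(1,2)[of i] r0 by auto
  have "c \<le> (\<Sum>i\<in>F. (diameter (U i) + \<eta> i) powr s)"
    by (rule balls[of F x "\<lambda>i. diameter (U i) + \<eta> i", OF F(1) small F(3)])
  also have "\<dots> \<le> (\<Sum>i\<in>F. 2 powr s * (diameter (U i) powr s + \<epsilon> * (1/2) ^ Suc i))"
  proof (intro sum_mono)
    fix i
    have "(diameter (U i) + \<eta> i) powr s \<le> 2 powr s * (diameter (U i) powr s + \<eta> i powr s)"
      using d(1) \<eta>(1) s by (intro powr_add_le) (auto intro: less_imp_le)
    also have "\<dots> \<le> 2 powr s * (diameter (U i) powr s + \<epsilon> * (1/2) ^ Suc i)"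
      using \<eta>(3)[of i] by (intro mult_left_mono add_left_mono) auto
    finally show "(diameter (U i) + \<eta> i) powr s \<le> 2 powr s * (diameter (U i) powr s + \<epsilon> * (1/2) ^ Suc i)" .
  qed
  also have "\<dots> = 2 powr s * ((\<Sum>i\<in>F. diameter (U i) powr s) + \<epsilon> * (\<Sum>i\<in>F. (1/2) ^ Suc i))"
    by (simp only: sum.distrib sum_distrib_left distrib_left)
  also have "\<dots> \<le> 2 powr s * ((\<Sum>i\<in>F. diameter (U i) powr s) + \<epsilon>)"
    using sum_half_powers_le_1[OF F(1)] \<epsilon> by (intro mult_left_mono add_left_mono) auto
  finally have "2 powr s * (2 * \<epsilon>) \<le> 2 powr s * ((\<Sum>i\<in>F. diameter (U i) powr s) + \<epsilon>)"
    by (simp add: \<epsilon>_def)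
  then have "\<epsilon> \<le> (\<Sum>i\<in>F. diameter (U i) powr s)"
    by (simp add: mult_le_cancel_left_pos)
  also have "\<dots> = (\<Sum>i\<in>F. hdiam s (U i))"
    using F(2) s by (intro sum.cong) (auto simp: hdiam_def)
  finally have "ennreal \<epsilon> \<le> ennreal (\<Sum>i\<in>F. hdiam s (U i))"
    by (rule ennreal_leI)
  also have "\<dots> = (\<Sum>i\<in>F. ennreal (hdiam s (U i)))"
    by (simp add: sum_ennreal hdiam_nonneg)
  also have "\<dots> \<le> (\<Sum>i. ennreal (hdiam s (U i)))"
    using F(1) by (intro sum_le_suminf) auto
  finally show ?thesis unfolding \<epsilon>_def .
qed

lemma hausdorff_measure_nonzero_if_ball_covers:
  assumes K: "compact K" and s: "0 < s" and c: "0 < c" and r0: "0 < r0"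
    and balls: "\<And>F x r. finite (F :: nat set) \<Longrightarrow> (\<And>i. i \<in> F \<Longrightarrow> x i \<in> K \<and> 0 < r i \<and> r i < r0)
                  \<Longrightarrow> K \<subseteq> (\<Union>i\<in>F. ball (x i) (r i)) \<Longrightarrow> c \<le> (\<Sum>i\<in>F. r i powr s)"
  shows "hausdorff_measure s K \<noteq> 0"
proof -
  have "ennreal (c / (2 * 2 powr s)) \<le> hausdorff_pre s (r0 / 2) K"
    unfolding hausdorff_pre_def
    by (intro INF_greatest) (auto intro: sum_hdiam_ge_if_ball_covers[OF K s c r0 balls])
  also have "\<dots> \<le> hausdorff_measure s K"
    unfolding hausdorff_measure_def using r0 by (intro SUP_upper) auto
  finally show ?thesis using c by auto
qed

lemma nowhere_dense_if_closed_null: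
  fixes S :: "real set"
  assumes "closed S" "S \<in> null_sets lebesgue"
  shows "nowhere_dense S"
proof -
  have "negligible (interior S)"
    using assms(2) interior_subset negligible_iff_null_sets negligible_subset by blast
  then show ?thesis
    using assms(1) open_not_negligible by (auto simp: nowhere_dense_def closure_closed)
qed

section \<open>Self-similar sets with strong separation\<close>

text \<open>The attractor of the similarities \<open>x \<mapsto> offset a + factor a * x\<close>, \<open>a \<in> A\<close>, described through
  its coding map \<open>p\<close>; \<open>p_gap\<close> is the strong separation condition.\<close>

locale separated_ifs =
  fixes A :: "'a::discrete_topology set"
    and offset factor :: "'a \<Rightarrow> real"
    and p :: "(nat \<Rightarrow> 'a) \<Rightarrow> real"
    and gap bound :: real
  assumes finite_letters: "finite A"
    and two_letters: "2 \<le> card A"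
    and factor_nonzero: "\<And>a. a \<in> A \<Longrightarrow> factor a \<noteq> 0"
    and factor_contracting: "\<And>a. a \<in> A \<Longrightarrow> \<bar>factor a\<bar> < 1"
    and p_case_nat: "\<And>a \<alpha>. a \<in> A \<Longrightarrow> \<alpha> \<in> codes A \<Longrightarrow> p (case_nat a \<alpha>) = offset a + factor a * p \<alpha>"
    and gap_pos: "0 < gap"
    and p_gap: "\<And>\<alpha> \<beta>. \<alpha> \<in> codes A \<Longrightarrow> \<beta> \<in> codes A \<Longrightarrow> \<alpha> 0 \<noteq> \<beta> 0 \<Longrightarrow> gap \<le> \<bar>p \<alpha> - p \<beta>\<bar>"
    and p_bounded: "\<And>\<alpha> \<beta>. \<alpha> \<in> codes A \<Longrightarrow> \<beta> \<in> codes A \<Longrightarrow> \<bar>p \<alpha> - p \<beta>\<bar> \<le> bound"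
begin

definition attractor :: "real set" where
  "attractor = p ` codes A"

definition weight :: "'a list \<Rightarrow> real" where
  "weight w = prod_list (map (\<lambda>a. \<bar>factor a\<bar>) w)"

definition ratio_max :: real where
  "ratio_max = Max ((\<lambda>a. \<bar>factor a\<bar>) ` A)"

definition ratio_min :: real where
  "ratio_min = Min ((\<lambda>a. \<bar>factor a\<bar>) ` A)"

lemma other_letter: "\<exists>b\<in>A. b \<noteq> a"
proof (rule ccontr)
  assume "\<not> (\<exists>b\<in>A. b \<noteq> a)"
  then have "card A \<le> card {a}" using finite_letters by (intro card_mono) auto
  then show False using two_letters by simp
qed

lemma letters_nonempty: "A \<noteq> {}"
  using other_letter by blast

lemma attractor_nonempty: "attractor \<noteq> {}"
  using codes_nonempty[OF letters_nonempty] by (simp add: attractor_def)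

lemma bound_nonneg: "0 \<le> bound"
proof -
  obtain \<alpha> where "\<alpha> \<in> codes A" using codes_nonempty[OF letters_nonempty] by blast
  then show ?thesis using p_bounded[of \<alpha> \<alpha>] by simp
qed

lemma ratio_min_pos: "0 < ratio_min"
  and ratio_min_le: "a \<in> A \<Longrightarrow> ratio_min \<le> \<bar>factor a\<bar>"
  and ratio_max_ge: "a \<in> A \<Longrightarrow> \<bar>factor a\<bar> \<le> ratio_max"
  and ratio_max_less_1: "ratio_max < 1"
  using finite_letters letters_nonempty factor_nonzero factor_contracting
  by (auto simp: ratio_min_def ratio_max_def)

lemma weight_Nil [simp]: "weight [] = 1"
  and weight_Cons [simp]: "weight (a # w) = \<bar>factor a\<bar> * weight w"
  and weight_append: "weight (v @ w) = weight v * weight w"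
  by (simp_all add: weight_def)

lemma weight_nonneg: "0 \<le> weight w"
  by (induction w) auto

lemma weight_pos: "set w \<subseteq> A \<Longrightarrow> 0 < weight w"
  by (induction w) (auto simp: factor_nonzero)

lemma weight_le_ratio_max_pow: "set w \<subseteq> A \<Longrightarrow> weight w \<le> ratio_max ^ length w"
proof (induction w)
  case (Cons a w)
  then show ?case
    using ratio_max_ge[of a] by (auto intro!: mult_mono weight_nonneg)
qed simp

lemma weight_stake_Suc:
  assumes "\<alpha> \<in> codes A"
  shows "ratio_min * weight (stake n \<alpha>) \<le> weight (stake (Suc n) \<alpha>)"
proof -
  have "ratio_min * weight (stake n \<alpha>) \<le> \<bar>factor (\<alpha> n)\<bar> * weight (stake n \<alpha>)"
    using assms ratio_min_le[of "\<alpha> n"] weight_nonneg by (intro mult_right_mono) (auto simp: codes_def)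
  then show ?thesis by (simp add: stake_Suc weight_append mult.commute)
qed

lemma weight_stake_antimono:
  assumes "\<alpha> \<in> codes A" "m \<le> n"
  shows "weight (stake n \<alpha>) \<le> weight (stake m \<alpha>)"
  using assms(2)
proof (induction n rule: dec_induct)
  case (step n)
  have "weight (stake (Suc n) \<alpha>) = weight (stake n \<alpha>) * \<bar>factor (\<alpha> n)\<bar>"
    by (simp add: stake_Suc weight_append)
  also have "\<dots> \<le> weight (stake n \<alpha>)"
    using factor_contracting[of "\<alpha> n"] assms(1) weight_nonneg[of "stake n \<alpha>"]
    by (auto simp: codes_def intro: mult_left_le)
  finally show ?case using step.IH by linarith
qed simp

lemma p_prepend:
  assumes "set w \<subseteq> A"
  obtains c r where "\<bar>r\<bar> = weight w" "\<And>\<alpha>. \<alpha> \<in> codes A \<Longrightarrow> p (prepend w \<alpha>) = c + r * p \<alpha>"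
  using assms
proof (induction w arbitrary: thesis)
  case Nil
  show ?case by (rule Nil(1)[of 1 0]) auto
next
  case (Cons a w)
  obtain c r where cr: "\<bar>r\<bar> = weight w" "\<And>\<alpha>. \<alpha> \<in> codes A \<Longrightarrow> p (prepend w \<alpha>) = c + r * p \<alpha>"
    using Cons.IH Cons.prems(2) by auto
  have a: "a \<in> A" using Cons.prems(2) by simp
  show ?case
  proof (rule Cons.prems(1))
    show "\<bar>factor a * r\<bar> = weight (a # w)" using cr(1) by (simp add: abs_mult)
    fix \<alpha> assume \<alpha>: "\<alpha> \<in> codes A"
    have "p (prepend (a # w) \<alpha>) = offset a + factor a * p (prepend w \<alpha>)"
      unfolding prepend_Cons using Cons.prems(2) \<alpha> by (intro p_case_nat a codes_prepend) auto
    also have "\<dots> = (offset a + factor a * c) + factor a * r * p \<alpha>"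
      using cr(2)[OF \<alpha>] by (simp add: algebra_simps)
    finally show "p (prepend (a # w) \<alpha>) = (offset a + factor a * c) + factor a * r * p \<alpha>" .
  qed
qed

lemma dist_prepend:
  assumes "set w \<subseteq> A" "\<alpha> \<in> codes A" "\<beta> \<in> codes A"
  shows "\<bar>p (prepend w \<alpha>) - p (prepend w \<beta>)\<bar> = weight w * \<bar>p \<alpha> - p \<beta>\<bar>"
proof -
  obtain c r where r: "\<bar>r\<bar> = weight w" "\<And>\<alpha>. \<alpha> \<in> codes A \<Longrightarrow> p (prepend w \<alpha>) = c + r * p \<alpha>"
    using p_prepend[OF assms(1)] by blast
  have "\<bar>p (prepend w \<alpha>) - p (prepend w \<beta>)\<bar> = \<bar>r * (p \<alpha> - p \<beta>)\<bar>"
    using assms(2,3) r(2) by (simp add: algebra_simps)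
  then show ?thesis by (simp add: abs_mult r(1))
qed

lemma dist_common_stake:
  assumes "\<alpha> \<in> codes A" "\<beta> \<in> codes A" "stake n \<alpha> = stake n \<beta>"
  shows "\<bar>p \<alpha> - p \<beta>\<bar> = weight (stake n \<alpha>) * \<bar>p (\<lambda>i. \<alpha> (i + n)) - p (\<lambda>i. \<beta> (i + n))\<bar>"
proof -
  have "\<alpha> = prepend (stake n \<alpha>) (\<lambda>i. \<alpha> (i + n))" "\<beta> = prepend (stake n \<alpha>) (\<lambda>i. \<beta> (i + n))"
    using prepend_stake_shift[of n \<alpha>] prepend_stake_shift[of n \<beta>] assms(3) by simp_all
  then show ?thesis
    using dist_prepend[OF set_stake_codes codes_shift codes_shift, OF assms(1,1,2)] by metis
qed

lemma dist_le_common_stake: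
  assumes "\<alpha> \<in> codes A" "\<beta> \<in> codes A" "stake n \<alpha> = stake n \<beta>"
  shows "\<bar>p \<alpha> - p \<beta>\<bar> \<le> bound * weight (stake n \<alpha>)"
proof -
  have "weight (stake n \<alpha>) * \<bar>p (\<lambda>i. \<alpha> (i + n)) - p (\<lambda>i. \<beta> (i + n))\<bar> \<le> weight (stake n \<alpha>) * bound"
    using assms(1,2) by (intro mult_left_mono p_bounded codes_shift weight_nonneg)
  then show ?thesis unfolding dist_common_stake[OF assms] by (simp add: mult.commute)
qed

lemma dist_ge_first_difference:
  assumes "\<alpha> \<in> codes A" "\<beta> \<in> codes A" "stake n \<alpha> = stake n \<beta>" "\<alpha> n \<noteq> \<beta> n"
  shows "gap * weight (stake n \<alpha>) \<le> \<bar>p \<alpha> - p \<beta>\<bar>"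
proof -
  have "weight (stake n \<alpha>) * gap \<le> weight (stake n \<alpha>) * \<bar>p (\<lambda>i. \<alpha> (i + n)) - p (\<lambda>i. \<beta> (i + n))\<bar>"
    using assms by (intro mult_left_mono p_gap codes_shift weight_nonneg) auto
  then show ?thesis unfolding dist_common_stake[OF assms(1-3)] by (simp add: mult.commute)
qed

lemma dist_le_ratio_max_pow:
  assumes "\<alpha> \<in> codes A" "\<beta> \<in> codes A" "stake n \<alpha> = stake n \<beta>"
  shows "\<bar>p \<alpha> - p \<beta>\<bar> \<le> bound * ratio_max ^ n"
  using dist_le_common_stake[OF assms] weight_le_ratio_max_pow[OF set_stake_codes[OF assms(1), of n]]
    bound_nonneg by (simp add: order_trans mult_left_mono)

lemma ratio_max_nonneg: "0 \<le> ratio_max"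
proof -
  obtain a where "a \<in> A" using letters_nonempty by blast
  then show ?thesis using ratio_max_ge[of a] by linarith
qed

lemma eventually_ratio_max_pow_less:
  assumes "0 < e"
  shows "\<forall>\<^sub>F n in sequentially. C * ratio_max ^ n < e"
proof -
  have "(\<lambda>n. C * ratio_max ^ n) \<longlonglongrightarrow> C * 0"
    using ratio_max_nonneg ratio_max_less_1 by (intro tendsto_mult tendsto_const LIMSEQ_power_zero) auto
  then show ?thesis using assms by (intro order_tendstoD(2)) auto
qed

lemma inj_on_p: "inj_on p (codes A)"
proof
  fix \<alpha> \<beta> assume \<alpha>: "\<alpha> \<in> codes A" and \<beta>: "\<beta> \<in> codes A" and eq: "p \<alpha> = p \<beta>"
  show "\<alpha> = \<beta>"
  proof (rule ccontr)
    assume "\<alpha> \<noteq> \<beta>"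
    then obtain n where "stake n \<alpha> = stake n \<beta>" "\<alpha> n \<noteq> \<beta> n" by (rule first_difference)
    then have "gap * weight (stake n \<alpha>) \<le> 0" using dist_ge_first_difference[OF \<alpha> \<beta>] eq by simp
    moreover have "0 < weight (stake n \<alpha>)" by (rule weight_pos[OF set_stake_codes[OF \<alpha>]])
    ultimately show False using gap_pos by (simp add: mult_le_0_iff)
  qed
qed

lemma continuous_on_p: "continuous_on (codes A) p"
  unfolding continuous_on_topological
proof (intro ballI allI impI)
  fix \<alpha> B assume \<alpha>: "\<alpha> \<in> codes A" and B: "open B" "p \<alpha> \<in> B"
  obtain e where e: "0 < e" "ball (p \<alpha>) e \<subseteq> B" using B openE by blast
  obtain n where n: "bound * ratio_max ^ n < e"
    using eventually_ratio_max_pow_less[OF e(1), where C=bound] by (auto simp: eventually_sequentially)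
  have "p \<beta> \<in> B" if "\<beta> \<in> codes A" "stake n \<beta> = stake n \<alpha>" for \<beta>
  proof -
    have "dist (p \<alpha>) (p \<beta>) < e"
      using dist_le_ratio_max_pow[OF \<alpha> that(1) that(2)[symmetric]] n by (simp add: dist_real_def)
    then show ?thesis using e(2) by auto
  qed
  then show "\<exists>U. open U \<and> \<alpha> \<in> U \<and> (\<forall>\<beta>\<in>codes A. \<beta> \<in> U \<longrightarrow> p \<beta> \<in> B)"
    using open_stake_eq[of n \<alpha>] by blast
qed

lemma compact_attractor: "compact attractor"
  unfolding attractor_def
  by (rule compact_continuous_image[OF continuous_on_p compact_codes[OF finite_letters]])

lemma attractor_eq_Union: "attractor = (\<Union>a\<in>A. (\<lambda>x. offset a + factor a * x) ` attractor)"
proof (intro equalityI subsetI)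
  fix x assume "x \<in> attractor"
  then obtain \<alpha> where \<alpha>: "\<alpha> \<in> codes A" "x = p \<alpha>" by (auto simp: attractor_def)
  then have "x = p (case_nat (\<alpha> 0) (\<lambda>n. \<alpha> (Suc n)))" by (simp add: case_nat_head_tail)
  moreover have "\<alpha> 0 \<in> A" "(\<lambda>n. \<alpha> (Suc n)) \<in> codes A" using \<alpha>(1) by (auto simp: codes_def)
  ultimately show "x \<in> (\<Union>a\<in>A. (\<lambda>x. offset a + factor a * x) ` attractor)"
    by (auto simp: attractor_def p_case_nat)
next
  fix x assume "x \<in> (\<Union>a\<in>A. (\<lambda>x. offset a + factor a * x) ` attractor)"
  then obtain a \<alpha> where "a \<in> A" "\<alpha> \<in> codes A" "x = offset a + factor a * p \<alpha>"
    by (auto simp: attractor_def)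
  then show "x \<in> attractor" unfolding attractor_def by (metis codes_case_nat image_eqI p_case_nat)
qed

lemma self_similar_attractor: "self_similar attractor"
  unfolding self_similar_def
proof (intro conjI exI)
  define f where "f a x = offset a + factor a * x" for a x
  show "compact attractor" "attractor \<noteq> {}" by (rule compact_attractor, rule attractor_nonempty)
  show "finite (f ` A)" "f ` A \<noteq> {}" using finite_letters letters_nonempty by simp_all
  show "\<forall>g\<in>f ` A. similarity_contraction g"
  proof
    fix g assume "g \<in> f ` A"
    then obtain a where a: "a \<in> A" "g = f a" by blast
    have "dist (g x) (g y) = \<bar>factor a\<bar> * dist x y" for x y
      using a(2) by (simp add: f_def dist_real_def abs_mult[symmetric] algebra_simps)
    moreover have "0 < \<bar>factor a\<bar>" "\<bar>factor a\<bar> < 1"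
      using a(1) factor_nonzero factor_contracting by auto
    ultimately show "similarity_contraction g"
      unfolding similarity_contraction_def by blast
  qed
  show "attractor = (\<Union>g\<in>f ` A. g ` attractor)"
    using attractor_eq_Union by (simp add: f_def)
qed

lemma uncountable_attractor: "uncountable attractor"
proof -
  obtain a where "a \<in> A" using letters_nonempty by blast
  moreover obtain b where "b \<in> A" "b \<noteq> a" using other_letter by blast
  ultimately have "uncountable (codes A)" by (intro uncountable_codes) auto
  then show ?thesis
    unfolding attractor_def using countable_image_inj_on[OF _ inj_on_p] by blast
qed

lemma perfect_attractor: "perfect_set attractor"
  unfolding perfect_set_def
proof (intro conjI ballI)
  show "closed attractor" by (rule compact_imp_closed[OF compact_attractor])
  fix x assume "x \<in> attractor"
  then obtain \<alpha> where \<alpha>: "\<alpha> \<in> codes A" "x = p \<alpha>" by (auto simp: attractor_def)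
  show "x islimpt attractor"
    unfolding islimpt_approachable
  proof (intro allI impI)
    fix e :: real assume "0 < e"
    then obtain n where n: "bound * ratio_max ^ n < e"
      using eventually_ratio_max_pow_less[where C=bound] by (auto simp: eventually_sequentially)
    obtain b where b: "b \<in> A" "b \<noteq> \<alpha> n" using other_letter by blast
    define \<beta> where "\<beta> = \<alpha>(n := b)"
    have \<beta>: "\<beta> \<in> codes A" using \<alpha>(1) b(1) by (auto simp: \<beta>_def codes_def)
    have "\<beta> n \<noteq> \<alpha> n" using b(2) by (simp add: \<beta>_def)
    then have "p \<beta> \<noteq> p \<alpha>" using inj_onD[OF inj_on_p _ \<beta> \<alpha>(1)] by metis
    moreover have "\<bar>p \<beta> - p \<alpha>\<bar> \<le> bound * ratio_max ^ n"
      using dist_le_ratio_max_pow[OF \<beta> \<alpha>(1)] by (simp add: \<beta>_def stake_eq_iff)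
    ultimately show "\<exists>y\<in>attractor. y \<noteq> x \<and> dist y x < e"
      using \<beta> n \<alpha>(2) by (intro bexI[of _ "p \<beta>"]) (auto simp: attractor_def dist_real_def)
  qed
qed

definition words :: "nat \<Rightarrow> 'a list set" where
  "words n = {w. set w \<subseteq> A \<and> length w = n}"

definition cylinder :: "'a list \<Rightarrow> real set" where
  "cylinder w = (\<lambda>\<alpha>. p (prepend w \<alpha>)) ` codes A"

lemma finite_words: "finite (words n)"
  unfolding words_def by (rule finite_lists_length_eq[OF finite_letters])

lemma attractor_subset_cylinders: "attractor \<subseteq> (\<Union>w\<in>words n. cylinder w)"
proof
  fix x assume "x \<in> attractor"
  then obtain \<alpha> where \<alpha>: "\<alpha> \<in> codes A" "x = p \<alpha>" by (auto simp: attractor_def)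
  then have "x \<in> cylinder (stake n \<alpha>)"
    using prepend_stake_shift[of n \<alpha>] codes_shift[OF \<alpha>(1), of n] unfolding cylinder_def by force
  moreover have "stake n \<alpha> \<in> words n" using set_stake_codes[OF \<alpha>(1)] by (simp add: words_def)
  ultimately show "x \<in> (\<Union>w\<in>words n. cylinder w)" by blast
qed

lemma cylinder_subset_attractor: "set w \<subseteq> A \<Longrightarrow> cylinder w \<subseteq> attractor"
  by (auto simp: cylinder_def attractor_def intro: codes_prepend)

lemma bounded_cylinder: "set w \<subseteq> A \<Longrightarrow> bounded (cylinder w)"
  by (meson bounded_subset cylinder_subset_attractor compact_imp_bounded compact_attractor)

lemma dist_cylinder_le:
  assumes "set w \<subseteq> A" "x \<in> cylinder w" "y \<in> cylinder w"
  shows "dist x y \<le> bound * weight w"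
proof -
  obtain \<alpha> \<beta> where \<alpha>\<beta>: "\<alpha> \<in> codes A" "\<beta> \<in> codes A" "x = p (prepend w \<alpha>)" "y = p (prepend w \<beta>)"
    using assms(2,3) by (auto simp: cylinder_def)
  then have "dist x y = weight w * \<bar>p \<alpha> - p \<beta>\<bar>"
    using dist_prepend[OF assms(1)] by (simp add: dist_real_def)
  also have "\<dots> \<le> weight w * bound"
    using \<alpha>\<beta>(1,2) by (intro mult_left_mono p_bounded weight_nonneg)
  finally show ?thesis by (simp add: mult.commute)
qed

lemma diameter_cylinder_le:
  assumes "set w \<subseteq> A"
  shows "diameter (cylinder w) \<le> bound * weight w"
proof (rule diameter_le)
  show "norm (x - y) \<le> bound * weight w" if "x \<in> cylinder w" "y \<in> cylinder w" for x y
    using dist_cylinder_le[OF assms that] by (simp add: dist_norm)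
qed (use bound_nonneg weight_nonneg in auto)

lemma weight_powr: "weight w powr s = prod_list (map (\<lambda>a. \<bar>factor a\<bar> powr s) w)"
  by (induction w) (auto simp: powr_mult)

lemma sum_words_weight_powr: "(\<Sum>w\<in>words n. weight w powr s) = (\<Sum>a\<in>A. \<bar>factor a\<bar> powr s) ^ n"
  unfolding weight_powr words_def by (rule sum_prod_list_lists_length[OF finite_letters])

lemma hausdorff_pre_attractor_le:
  assumes s: "0 < s" and \<delta>: "bound * ratio_max ^ n \<le> \<delta>"
  shows "hausdorff_pre s \<delta> attractor \<le> ennreal (bound powr s * (\<Sum>a\<in>A. \<bar>factor a\<bar> powr s) ^ n)"
proof -
  have diam: "diameter (cylinder w) \<le> bound * ratio_max ^ n" if "w \<in> words n" for w
    using that diameter_cylinder_le weight_le_ratio_max_pow bound_nonneg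
    by (force simp: words_def intro: order_trans mult_left_mono)
  have cover: "hausdorff_pre s \<delta> attractor \<le> ennreal (\<Sum>U\<in>cylinder ` words n. hdiam s U)"
  proof (rule hausdorff_pre_le_finite_cover)
    show "0 \<le> \<delta>" using \<delta> bound_nonneg ratio_max_nonneg by (meson order_trans zero_le_mult_iff zero_le_power)
    show "bounded U \<and> diameter U \<le> \<delta>" if "U \<in> cylinder ` words n" for U
      using that diam \<delta> bounded_cylinder by (force simp: words_def)
  qed (use finite_words attractor_subset_cylinders in auto)
  have "(\<Sum>U\<in>cylinder ` words n. hdiam s U) \<le> (\<Sum>w\<in>words n. hdiam s (cylinder w))"
    using sum_image_le[of "words n" "hdiam s" cylinder] finite_words hdiam_nonneg
    by (simp add: comp_def)
  also have "\<dots> \<le> (\<Sum>w\<in>words n. bound powr s * weight w powr s)"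
  proof (intro sum_mono)
    fix w assume w: "w \<in> words n"
    have "diameter (cylinder w) powr s \<le> (bound * weight w) powr s"
      using w s diameter_cylinder_le bounded_cylinder
      by (intro powr_mono2) (auto simp: words_def diameter_ge_0)
    then show "hdiam s (cylinder w) \<le> bound powr s * weight w powr s"
      using s bound_nonneg weight_nonneg by (auto simp: hdiam_def powr_mult)
  qed
  also have "\<dots> = bound powr s * (\<Sum>a\<in>A. \<bar>factor a\<bar> powr s) ^ n"
    by (simp add: sum_distrib_left[symmetric] sum_words_weight_powr)
  finally show ?thesis using cover order_trans ennreal_leI by blast
qed

lemma hausdorff_measure_attractor_eq_0:
  assumes s: "0 < s" and less: "(\<Sum>a\<in>A. \<bar>factor a\<bar> powr s) < 1"
  shows "hausdorff_measure s attractor = 0"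
proof -
  define \<sigma> where "\<sigma> = (\<Sum>a\<in>A. \<bar>factor a\<bar> powr s)"
  have "hausdorff_pre s \<delta> attractor \<le> ennreal e" if "0 < \<delta>" "0 < e" for \<delta> e
  proof -
    have "\<sigma> \<ge> 0" unfolding \<sigma>_def by (intro sum_nonneg) auto
    then have "(\<lambda>n. bound powr s * \<sigma> ^ n) \<longlonglongrightarrow> bound powr s * 0"
      using less by (intro tendsto_mult tendsto_const LIMSEQ_power_zero) (auto simp: \<sigma>_def)
    then have "\<forall>\<^sub>F n in sequentially. bound powr s * \<sigma> ^ n < e"
      using that(2) by (intro order_tendstoD(2)) auto
    moreover have "\<forall>\<^sub>F n in sequentially. bound * ratio_max ^ n < \<delta>"
      by (rule eventually_ratio_max_pow_less[OF that(1)])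
    ultimately obtain n where "bound powr s * \<sigma> ^ n < e" "bound * ratio_max ^ n < \<delta>"
      by (metis (mono_tags, lifting) eventually_conj_iff eventually_happens' sequentially_bot)
    then show ?thesis
      using hausdorff_pre_attractor_le[OF s, of n \<delta>] unfolding \<sigma>_def
      by (meson ennreal_leI less_imp_le order_trans)
  qed
  then have "hausdorff_pre s \<delta> attractor = 0" if "0 < \<delta>" for \<delta>
    using that by (metis ennreal_le_epsilon le_zero_eq add_0)
  then show ?thesis by (simp add: hausdorff_measure_def)
qed

lemma emeasure_attractor_le:
  "emeasure lborel attractor \<le> ennreal (2 * bound * (\<Sum>a\<in>A. \<bar>factor a\<bar>) ^ n)"
proof -
  obtain \<alpha>\<^sub>0 where \<alpha>\<^sub>0: "\<alpha>\<^sub>0 \<in> codes A" using codes_nonempty[OF letters_nonempty] by blast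
  define I where "I w = {p (prepend w \<alpha>\<^sub>0) - bound * weight w .. p (prepend w \<alpha>\<^sub>0) + bound * weight w}" for w
  have "cylinder w \<subseteq> I w" if "w \<in> words n" for w
  proof
    fix x assume "x \<in> cylinder w"
    moreover have "p (prepend w \<alpha>\<^sub>0) \<in> cylinder w" using \<alpha>\<^sub>0 by (simp add: cylinder_def)
    ultimately have "dist x (p (prepend w \<alpha>\<^sub>0)) \<le> bound * weight w"
      using that by (intro dist_cylinder_le) (auto simp: words_def)
    then show "x \<in> I w" by (auto simp: I_def dist_real_def abs_le_iff)
  qed
  then have "attractor \<subseteq> (\<Union>w\<in>words n. I w)" using attractor_subset_cylinders by blast
  then have "emeasure lborel attractor \<le> emeasure lborel (\<Union>w\<in>words n. I w)"
    using finite_words by (intro emeasure_mono sets.finite_UN) (auto simp: I_def)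
  also have "\<dots> \<le> (\<Sum>w\<in>words n. emeasure lborel (I w))"
    using finite_words by (intro emeasure_subadditive_finite) (auto simp: I_def)
  also have "\<dots> = (\<Sum>w\<in>words n. ennreal (2 * bound * weight w))"
    using bound_nonneg weight_nonneg by (intro sum.cong) (auto simp: I_def algebra_simps)
  also have "\<dots> = ennreal (2 * bound * (\<Sum>w\<in>words n. weight w))"
    using bound_nonneg weight_nonneg by (simp add: sum_ennreal sum_distrib_left)
  also have "(\<Sum>w\<in>words n. weight w) = (\<Sum>a\<in>A. \<bar>factor a\<bar>) ^ n"
    unfolding weight_def words_def by (rule sum_prod_list_lists_length[OF finite_letters])
  finally show ?thesis .
qed

lemma attractor_null:
  assumes less: "(\<Sum>a\<in>A. \<bar>factor a\<bar>) < 1"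
  shows "attractor \<in> null_sets lebesgue"
proof -
  define \<tau> where "\<tau> = (\<Sum>a\<in>A. \<bar>factor a\<bar>)"
  have "emeasure lborel attractor \<le> ennreal e" if "0 < e" for e
  proof -
    have "0 \<le> \<tau>" unfolding \<tau>_def by (intro sum_nonneg) auto
    then have "(\<lambda>n. 2 * bound * \<tau> ^ n) \<longlonglongrightarrow> 2 * bound * 0"
      using less by (intro tendsto_mult tendsto_const LIMSEQ_power_zero) (auto simp: \<tau>_def)
    then have "\<forall>\<^sub>F n in sequentially. 2 * bound * \<tau> ^ n < e"
      using that by (intro order_tendstoD(2)) auto
    then obtain n where "2 * bound * \<tau> ^ n < e" by (auto simp: eventually_sequentially)
    then show ?thesis
      using emeasure_attractor_le[of n] unfolding \<tau>_def
      by (meson ennreal_leI less_imp_le order_trans)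
  qed
  then have "emeasure lborel attractor = 0"
    by (metis ennreal_le_epsilon le_zero_eq add_0)
  moreover have "attractor \<in> sets lborel"
    using compact_imp_closed[OF compact_attractor] by (simp add: borel_closed)
  ultimately show ?thesis by (intro null_sets_completionI null_setsI) auto
qed

lemma nowhere_dense_attractor: "(\<Sum>a\<in>A. \<bar>factor a\<bar>) < 1 \<Longrightarrow> nowhere_dense attractor"
  using compact_imp_closed[OF compact_attractor] attractor_null by (rule nowhere_dense_if_closed_null)

lemma stake_eq_if_dist_less:
  assumes \<alpha>: "\<alpha> \<in> codes A" and \<beta>: "\<beta> \<in> codes A"
    and close: "\<bar>p \<alpha> - p \<beta>\<bar> < gap * weight (stake n \<alpha>)"
  shows "stake n \<beta> = stake n \<alpha>"
proof (rule ccontr)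
  assume differ: "stake n \<beta> \<noteq> stake n \<alpha>"
  then have "\<alpha> \<noteq> \<beta>" by auto
  then obtain m where m: "stake m \<alpha> = stake m \<beta>" "\<alpha> m \<noteq> \<beta> m" by (rule first_difference)
  have "m < n"
  proof (rule ccontr)
    assume "\<not> m < n"
    then have "stake n \<alpha> = stake n \<beta>" using m(1) by (auto simp: stake_eq_iff)
    then show False using differ by simp
  qed
  have "gap * weight (stake n \<alpha>) \<le> gap * weight (stake m \<alpha>)"
    using weight_stake_antimono[OF \<alpha>, of m n] \<open>m < n\<close> gap_pos by simp
  also have "\<dots> \<le> \<bar>p \<alpha> - p \<beta>\<bar>" by (rule dist_ge_first_difference[OF \<alpha> \<beta> m])
  finally show False using close by simp
qed

text \<open>The level of the cylinder around a code whose size matches a given radius.\<close>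

lemma cylinder_scale:
  assumes \<alpha>: "\<alpha> \<in> codes A" and r: "0 < r" "r < gap"
  obtains n where "r < gap * weight (stake n \<alpha>)" "gap * ratio_min * weight (stake n \<alpha>) \<le> r"
proof -
  have "\<forall>\<^sub>F m in sequentially. gap * ratio_max ^ m < r"
    by (rule eventually_ratio_max_pow_less[OF r(1)])
  then obtain m where m: "gap * ratio_max ^ m < r" by (auto simp: eventually_sequentially)
  have "weight (stake m \<alpha>) \<le> ratio_max ^ m"
    using weight_le_ratio_max_pow[OF set_stake_codes[OF \<alpha>], of m] by simp
  then have "gap * weight (stake m \<alpha>) \<le> gap * ratio_max ^ m" using gap_pos by simp
  then have ex: "gap * weight (stake m \<alpha>) \<le> r" using m by linarith
  define n where "n = (LEAST n. gap * weight (stake (Suc n) \<alpha>) \<le> r)"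
  have "m \<noteq> 0"
  proof
    assume "m = 0"
    then show False using ex r(2) by (simp add: stake_def)
  qed
  then have "gap * weight (stake (Suc (m - 1)) \<alpha>) \<le> r" using ex by simp
  then have small: "gap * weight (stake (Suc n) \<alpha>) \<le> r"
    unfolding n_def by (rule LeastI)
  have "r < gap * weight (stake n \<alpha>)"
  proof (cases n)
    case 0
    then show ?thesis using r(2) by (simp add: stake_def)
  next
    case (Suc k)
    then have "\<not> gap * weight (stake (Suc k) \<alpha>) \<le> r"
      using not_less_Least[of k "\<lambda>n. gap * weight (stake (Suc n) \<alpha>) \<le> r"] by (simp add: n_def)
    then show ?thesis using Suc by simp
  qed
  moreover have "gap * (ratio_min * weight (stake n \<alpha>)) \<le> gap * weight (stake (Suc n) \<alpha>)"
    using weight_stake_Suc[OF \<alpha>, of n] gap_pos by simp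
  then have "gap * ratio_min * weight (stake n \<alpha>) \<le> r"
    using small by (simp add: mult.assoc)
  ultimately show ?thesis by (rule that)
qed

lemma cylinder_around:
  assumes x: "x \<in> attractor" and r: "0 < r" "r < gap"
  obtains w where "set w \<subseteq> A" "weight w * (gap * ratio_min) \<le> r"
    "\<And>\<beta>. \<beta> \<in> codes A \<Longrightarrow> \<bar>x - p \<beta>\<bar> < r \<Longrightarrow> stake (length w) \<beta> = w"
proof -
  obtain \<alpha> where \<alpha>: "\<alpha> \<in> codes A" "x = p \<alpha>" using x by (auto simp: attractor_def)
  obtain n where n: "r < gap * weight (stake n \<alpha>)" "gap * ratio_min * weight (stake n \<alpha>) \<le> r"
    using cylinder_scale[OF \<alpha>(1) r] .
  show ?thesis
  proof (rule that[of "stake n \<alpha>"])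
    show "set (stake n \<alpha>) \<subseteq> A" using set_stake_codes[OF \<alpha>(1)] .
    show "weight (stake n \<alpha>) * (gap * ratio_min) \<le> r" using n(2) by (simp add: mult_ac)
    show "stake (length (stake n \<alpha>)) \<beta> = stake n \<alpha>" if "\<beta> \<in> codes A" "\<bar>x - p \<beta>\<bar> < r" for \<beta>
      using stake_eq_if_dist_less[OF \<alpha>(1) that(1)] that(2) n(1) \<alpha>(2) by simp
  qed
qed

text \<open>The cylinders chosen inside the balls of a cover form a prefix code covering all codes.\<close>

lemma ball_cover_sum_ge:
  fixes F :: "nat set"
  assumes s: "0 < s" and sum_ge: "1 \<le> (\<Sum>a\<in>A. \<bar>factor a\<bar> powr s)" and F: "finite F"
    and balls: "\<And>i. i \<in> F \<Longrightarrow> x i \<in> attractor \<and> 0 < r i \<and> r i < gap"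
    and cover: "attractor \<subseteq> (\<Union>i\<in>F. ball (x i) (r i))"
  shows "(gap * ratio_min) powr s \<le> (\<Sum>i\<in>F. r i powr s)"
proof -
  have "\<forall>i\<in>F. \<exists>w. set w \<subseteq> A \<and> weight w * (gap * ratio_min) \<le> r i
                  \<and> (\<forall>\<beta>\<in>codes A. \<bar>x i - p \<beta>\<bar> < r i \<longrightarrow> stake (length w) \<beta> = w)"
  proof
    fix i assume "i \<in> F"
    with balls obtain w where "set w \<subseteq> A" "weight w * (gap * ratio_min) \<le> r i"
      "\<And>\<beta>. \<beta> \<in> codes A \<Longrightarrow> \<bar>x i - p \<beta>\<bar> < r i \<Longrightarrow> stake (length w) \<beta> = w"
      using cylinder_around by blast
    then show "\<exists>w. set w \<subseteq> A \<and> weight w * (gap * ratio_min) \<le> r i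
                  \<and> (\<forall>\<beta>\<in>codes A. \<bar>x i - p \<beta>\<bar> < r i \<longrightarrow> stake (length w) \<beta> = w)" by blast
  qed
  then obtain w where w: "\<forall>i\<in>F. set (w i) \<subseteq> A \<and> weight (w i) * (gap * ratio_min) \<le> r i
                  \<and> (\<forall>\<beta>\<in>codes A. \<bar>x i - p \<beta>\<bar> < r i \<longrightarrow> stake (length (w i)) \<beta> = w i)"
    by (auto dest!: bchoice)
  have "1 \<le> (\<Sum>v\<in>w ` F. weight v powr s)"
    unfolding weight_powr
  proof (rule prefix_cover_weight_ge_1[OF _ sum_ge])
    show "finite (w ` F)" using F by simp
    fix \<beta> assume \<beta>: "\<beta> \<in> codes A"
    then obtain i where "i \<in> F" "p \<beta> \<in> ball (x i) (r i)"
      using cover by (auto simp: attractor_def)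
    then show "\<exists>v\<in>w ` F. stake (length v) \<beta> = v" using w \<beta> by (auto simp: dist_real_def)
  qed simp
  also have "\<dots> \<le> (\<Sum>i\<in>F. weight (w i) powr s)"
    using sum_image_le[of F "\<lambda>v. weight v powr s" w] F by (simp add: comp_def)
  also have "\<dots> \<le> (\<Sum>i\<in>F. (r i / (gap * ratio_min)) powr s)"
    using w gap_pos ratio_min_pos weight_nonneg
    by (intro sum_mono powr_mono2) (auto simp: pos_le_divide_eq less_imp_le[OF s])
  also have "\<dots> = (\<Sum>i\<in>F. r i powr s) / (gap * ratio_min) powr s"
    unfolding sum_divide_distrib using balls gap_pos ratio_min_pos
    by (intro sum.cong refl powr_divide)
  finally show ?thesis
    using gap_pos ratio_min_pos by (simp add: pos_le_divide_eq)
qed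

lemma hausdorff_measure_attractor_nonzero:
  assumes "0 < s" "1 \<le> (\<Sum>a\<in>A. \<bar>factor a\<bar> powr s)"
  shows "hausdorff_measure s attractor \<noteq> 0"
  using compact_attractor assms(1) _ gap_pos ball_cover_sum_ge[OF assms]
  by (rule hausdorff_measure_nonzero_if_ball_covers) (use gap_pos ratio_min_pos in auto)

lemma sum_factor_powr_strict_antimono:
  assumes "s < t"
  shows "(\<Sum>a\<in>A. \<bar>factor a\<bar> powr t) < (\<Sum>a\<in>A. \<bar>factor a\<bar> powr s)"
  using finite_letters letters_nonempty assms factor_nonzero factor_contracting
  by (intro sum_strict_mono powr_less_mono') auto

lemma hausdorff_dim_attractor:
  assumes d: "0 < d" and moran: "(\<Sum>a\<in>A. \<bar>factor a\<bar> powr d) = 1"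
  shows "hausdorff_dim attractor = d"
proof (rule hausdorff_dim_eqI)
  show "hausdorff_measure s attractor = 0" if "d < s" for s
    using that d sum_factor_powr_strict_antimono[OF that] moran
    by (intro hausdorff_measure_attractor_eq_0) auto
  show "hausdorff_measure s attractor \<noteq> 0" if "0 \<le> s" "s < d" for s
  proof (cases "s = 0")
    case True
    then show ?thesis using hausdorff_measure_0_nonempty[OF attractor_nonempty] by simp
  next
    case False
    then show ?thesis
      using that sum_factor_powr_strict_antimono[OF that(2)] moran
      by (intro hausdorff_measure_attractor_nonzero) auto
  qed
qed (use d in simp)

lemma similarity_dimension_exists:
  assumes "(\<Sum>a\<in>A. \<bar>factor a\<bar>) < 1"
  obtains d where "0 < d" "d < 1" "(\<Sum>a\<in>A. \<bar>factor a\<bar> powr d) = 1"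
proof -
  define \<phi> where "\<phi> s = (\<Sum>a\<in>A. \<bar>factor a\<bar> powr s)" for s
  have "continuous_on {0..1} \<phi>"
    unfolding \<phi>_def using factor_nonzero by (intro continuous_intros) auto
  moreover have \<phi>0: "\<phi> 0 = card A" and \<phi>1: "\<phi> 1 = (\<Sum>a\<in>A. \<bar>factor a\<bar>)"
    using factor_nonzero by (simp_all add: \<phi>_def)
  ultimately obtain d where d: "0 \<le> d" "d \<le> 1" "\<phi> d = 1"
    using IVT2'[of \<phi> 1 1 0] assms two_letters by force
  moreover have "d \<noteq> 0" "d \<noteq> 1" using d \<phi>0 \<phi>1 two_letters assms by auto
  ultimately have "0 < d" "d < 1" by auto
  then show ?thesis using that d(3) by (simp add: \<phi>_def)
qed

end

lemma sum_uniform_powr_log: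
  assumes "1 < q" "A \<noteq> {}" "finite A"
  shows "(\<Sum>a\<in>A. (1 / q) powr log q (card A)) = 1"
proof -
  have "0 < card A" using assms(2,3) by (simp add: card_gt_0_iff)
  then show ?thesis using assms(1) by (simp add: powr_divide)
qed

lemma moran_solution_less:
  fixes f g :: "'a \<Rightarrow> real"
  assumes A: "finite A" and fg: "\<And>a. a \<in> A \<Longrightarrow> 0 < f a \<and> f a \<le> g a \<and> g a < 1"
    and b: "b \<in> A" "f b < g b" and t: "0 < t"
    and f_moran: "(\<Sum>a\<in>A. f a powr s) = 1" and g_moran: "(\<Sum>a\<in>A. g a powr t) = 1"
  shows "s < t"
proof (rule ccontr)
  assume "\<not> s < t"
  then have "(\<Sum>a\<in>A. f a powr s) \<le> (\<Sum>a\<in>A. f a powr t)"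
  proof (intro sum_mono powr_mono')
    fix a assume "a \<in> A"
    then show "0 \<le> f a" "f a \<le> 1" using fg[of a] by auto
  qed simp
  also have "\<dots> < (\<Sum>a\<in>A. g a powr t)"
    using A fg b t by (intro sum_strict_mono_ex1) (auto intro: powr_mono2 powr_less_mono2 less_imp_le)
  finally show False using f_moran g_moran by simp
qed

section \<open>Nega-q-ary expansions\<close>

definition digit_seq :: "nat \<Rightarrow> (nat \<Rightarrow> nat) \<Rightarrow> bool" where
  "digit_seq q d \<longleftrightarrow> (\<forall>k. d k \<le> q - 1)"

lemma digit_seq_shift: "digit_seq q d \<Longrightarrow> digit_seq q (\<lambda>j. d (j + m))"
  by (simp add: digit_seq_def)

lemma summable_negaq:
  assumes q: "q \<ge> 2" and d: "\<And>k. d k \<le> B"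
  shows "summable (\<lambda>k. real (d k) / (- real q) ^ Suc k)"
proof (rule summable_comparison_test[where g="\<lambda>k. (real B / q) * (1 / real q) ^ k"])
  show "summable (\<lambda>k. (real B / q) * (1 / real q) ^ k)"
    using q by (intro summable_mult summable_geometric) auto
  have "norm (real (d k) / (- real q) ^ Suc k) \<le> real B / real q * (1 / real q) ^ k" for k
  proof -
    have "norm (real (d k) / (- real q) ^ Suc k) = real (d k) / real q ^ Suc k"
      by (simp add: norm_divide abs_mult power_abs)
    also have "\<dots> \<le> real B / real q ^ Suc k"
      using d[of k] q by (intro divide_right_mono) auto
    also have "\<dots> = real B / real q * (1 / real q) ^ k"
      by (simp add: power_divide field_simps)
    finally show ?thesis .
  qed
  then show "\<exists>N. \<forall>k\<ge>N. norm (real (d k) / (- real q) ^ Suc k) \<le> real B / real q * (1 / real q) ^ k"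
    by blast
qed

lemma summable_negaq_digits:
  "q \<ge> 2 \<Longrightarrow> digit_seq q d \<Longrightarrow> summable (\<lambda>k. real (d k) / (- real q) ^ Suc k)"
  by (rule summable_negaq[of q d "q - 1"]) (auto simp: digit_seq_def)

lemma negaq_split:
  assumes q: "q \<ge> 2" and d: "digit_seq q d"
  shows "negaq q d = (\<Sum>k<n. real (d k) / (- real q) ^ Suc k)
            + (1 / (- real q)) ^ n * negaq q (\<lambda>k. d (k + n))"
proof -
  have tail: "real (d (k + n)) / (- real q) ^ Suc (k + n)
      = (1 / (- real q)) ^ n * (real (d (k + n)) / (- real q) ^ Suc k)" for k
  proof -
    have "(- real q) ^ Suc (k + n) = (- real q) ^ Suc k * (- real q) ^ n"
      by (metis add_Suc power_add)
    then show ?thesis unfolding power_one_over using q by (simp add: field_simps)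
  qed
  have "negaq q d = (\<Sum>k. real (d (k + n)) / (- real q) ^ Suc (k + n))
                   + (\<Sum>k<n. real (d k) / (- real q) ^ Suc k)"
    unfolding negaq_def by (rule suminf_split_initial_segment[OF summable_negaq_digits[OF q d]])
  also have "(\<Sum>k. real (d (k + n)) / (- real q) ^ Suc (k + n))
      = (1 / (- real q)) ^ n * negaq q (\<lambda>k. d (k + n))"
    unfolding tail negaq_def
    by (rule suminf_mult[OF summable_negaq_digits[OF q digit_seq_shift[OF d]]])
  finally show ?thesis by simp
qed

text \<open>If the digit differences alternate in sign like the powers of \<open>-q\<close>, every term of
  the difference series is nonnegative, so it dominates each partial sum of absolute values.\<close>

lemma negaq_diff_ge:
  assumes q: "q \<ge> 2" and a: "digit_seq q a" and b: "digit_seq q b"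
    and sign: "\<And>k. (-1) ^ Suc k * (real (a k) - real (b k)) \<ge> 0"
  shows "(\<Sum>k<n. \<bar>real (a k) - real (b k)\<bar> / real q ^ Suc k) \<le> negaq q a - negaq q b"
proof -
  have termwise: "(real (a k) - real (b k)) / (- real q) ^ Suc k
      = \<bar>real (a k) - real (b k)\<bar> / real q ^ Suc k" for k
  proof -
    have "(- real q) ^ Suc k = (-1) ^ Suc k * real q ^ Suc k"
      by (simp add: power_minus[of "real q"])
    then have "(real (a k) - real (b k)) / (- real q) ^ Suc k
        = ((-1) ^ Suc k * (real (a k) - real (b k))) / real q ^ Suc k"
      using q by (cases "even k") (auto simp: field_simps)
    also have "(-1) ^ Suc k * (real (a k) - real (b k)) = \<bar>real (a k) - real (b k)\<bar>"
      using sign[of k] by (cases "even k") auto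
    finally show ?thesis .
  qed
  have sa: "summable (\<lambda>k. real (a k) / (- real q) ^ Suc k)"
    by (rule summable_negaq_digits[OF q a])
  have sb: "summable (\<lambda>k. real (b k) / (- real q) ^ Suc k)"
    by (rule summable_negaq_digits[OF q b])
  have "summable (\<lambda>k. (real (a k) - real (b k)) / (- real q) ^ Suc k)"
    using summable_diff[OF sa sb] by (simp add: diff_divide_distrib)
  then have "(\<Sum>k<n. \<bar>real (a k) - real (b k)\<bar> / real q ^ Suc k)
      \<le> (\<Sum>k. \<bar>real (a k) - real (b k)\<bar> / real q ^ Suc k)"
    unfolding termwise by (intro sum_le_suminf) auto
  also have "\<dots> = negaq q a - negaq q b"
    using suminf_diff[OF sa sb] unfolding negaq_def termwise[symmetric]
    by (simp add: diff_divide_distrib)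
  finally show ?thesis .
qed

definition negaq_max_digits :: "nat \<Rightarrow> nat \<Rightarrow> nat" where
  "negaq_max_digits q k = (if odd k then q - 1 else 0)"

definition negaq_min_digits :: "nat \<Rightarrow> nat \<Rightarrow> nat" where
  "negaq_min_digits q k = (if odd k then 0 else q - 1)"

lemma digit_seq_negaq_max_digits: "q \<ge> 1 \<Longrightarrow> digit_seq q (negaq_max_digits q)"
  and digit_seq_negaq_min_digits: "q \<ge> 1 \<Longrightarrow> digit_seq q (negaq_min_digits q)"
  by (auto simp: digit_seq_def negaq_max_digits_def negaq_min_digits_def)

lemma negaq_max_digits:
  assumes q: "q \<ge> 2" shows "negaq q (negaq_max_digits q) = 1 / (real q + 1)"
proof -
  have "(\<lambda>k. negaq_max_digits q (k + 2)) = negaq_max_digits q"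
    by (auto simp: negaq_max_digits_def)
  then have "negaq q (negaq_max_digits q)
      = (real q - 1) / real q ^ 2 + negaq q (negaq_max_digits q) / real q ^ 2"
    using negaq_split[OF q digit_seq_negaq_max_digits, of 2] q
    by (simp add: negaq_max_digits_def eval_nat_numeral power_divide of_nat_diff)
  then have "negaq q (negaq_max_digits q) * real q ^ 2 = (real q - 1) + negaq q (negaq_max_digits q)"
    using q by (simp add: field_simps)
  then have "(negaq q (negaq_max_digits q) * (real q + 1) - 1) * (real q - 1) = 0"
    by (simp add: power2_eq_square algebra_simps)
  then have "negaq q (negaq_max_digits q) * (real q + 1) = 1" using q by simp
  then show ?thesis using q by (simp add: field_simps)
qed

lemma negaq_min_digits:
  assumes q: "q \<ge> 2" shows "negaq q (negaq_min_digits q) = - real q / (real q + 1)"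
proof -
  have "(\<lambda>k. negaq_min_digits q (k + 2)) = negaq_min_digits q"
    by (auto simp: negaq_min_digits_def)
  then have "negaq q (negaq_min_digits q)
      = negaq q (negaq_min_digits q) / real q ^ 2 - (real q - 1) / real q"
    using negaq_split[OF q digit_seq_negaq_min_digits, of 2] q
    by (simp add: negaq_min_digits_def eval_nat_numeral power_divide of_nat_diff)
  then have "negaq q (negaq_min_digits q) * real q ^ 2 = - (real q - 1) * real q + negaq q (negaq_min_digits q)"
    using q by (simp add: field_simps power2_eq_square)
  then have "(negaq q (negaq_min_digits q) * (real q + 1) + real q) * (real q - 1) = 0"
    by (simp add: power2_eq_square algebra_simps)
  then have "negaq q (negaq_min_digits q) * (real q + 1) = - real q" using q by simp
  then show ?thesis using q by (simp add: field_simps)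
qed

lemma sum_stake_diff_ge:
  assumes q: "q \<ge> 2" and ne: "stake n a \<noteq> stake n b"
  shows "1 / real q ^ n \<le> (\<Sum>k<n. \<bar>real (a k) - real (b k)\<bar> / real q ^ Suc k)"
proof -
  obtain j where j: "j < n" "a j \<noteq> b j" using ne by (auto simp: stake_eq_iff)
  have "1 / real q ^ n \<le> 1 / real q ^ Suc j"
    using q j by (intro divide_left_mono power_increasing) auto
  also have "\<dots> \<le> \<bar>real (a j) - real (b j)\<bar> / real q ^ Suc j"
    using j q by (intro divide_right_mono) auto
  also have "\<dots> \<le> (\<Sum>k<n. \<bar>real (a k) - real (b k)\<bar> / real q ^ Suc k)"
    using j by (intro member_le_sum) auto
  finally show ?thesis .
qed

lemma negaq_le_max:
  assumes q: "q \<ge> 2" and d: "digit_seq q d"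
  shows "negaq q d \<le> 1 / (real q + 1)"
    and "stake n d \<noteq> stake n (negaq_max_digits q) \<Longrightarrow> negaq q d \<le> 1 / (real q + 1) - 1 / real q ^ n"
proof -
  have max: "digit_seq q (negaq_max_digits q)" using q by (simp add: digit_seq_negaq_max_digits)
  have sign: "(-1) ^ Suc k * (real (negaq_max_digits q k) - real (d k)) \<ge> 0" for k
    using d by (cases "even k") (auto simp: negaq_max_digits_def digit_seq_def of_nat_diff)
  note diff = negaq_diff_ge[OF q max d sign, unfolded negaq_max_digits[OF q]]
  show "negaq q d \<le> 1 / (real q + 1)"
    using diff[of 0] by simp
  assume "stake n d \<noteq> stake n (negaq_max_digits q)"
  then have "1 / real q ^ n \<le> (\<Sum>k<n. \<bar>real (negaq_max_digits q k) - real (d k)\<bar> / real q ^ Suc k)"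
    by (intro sum_stake_diff_ge[OF q]) auto
  then show "negaq q d \<le> 1 / (real q + 1) - 1 / real q ^ n"
    using diff[of n] by linarith
qed

lemma negaq_ge_min:
  assumes q: "q \<ge> 2" and d: "digit_seq q d"
  shows "- real q / (real q + 1) \<le> negaq q d"
    and "stake n d \<noteq> stake n (negaq_min_digits q) \<Longrightarrow> - real q / (real q + 1) + 1 / real q ^ n \<le> negaq q d"
proof -
  have min: "digit_seq q (negaq_min_digits q)" using q by (simp add: digit_seq_negaq_min_digits)
  have sign: "(-1) ^ Suc k * (real (d k) - real (negaq_min_digits q k)) \<ge> 0" for k
    using d by (cases "even k") (auto simp: negaq_min_digits_def digit_seq_def of_nat_diff)
  note diff = negaq_diff_ge[OF q d min sign, unfolded negaq_min_digits[OF q]]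
  show "- real q / (real q + 1) \<le> negaq q d"
    using diff[of 0] by simp
  assume "stake n d \<noteq> stake n (negaq_min_digits q)"
  then have "1 / real q ^ n \<le> (\<Sum>k<n. \<bar>real (d k) - real (negaq_min_digits q k)\<bar> / real q ^ Suc k)"
    by (intro sum_stake_diff_ge[OF q])
  then show "- real q / (real q + 1) + 1 / real q ^ n \<le> negaq q d"
    using diff[of n] by linarith
qed

lemma negaq_dist_le_1:
  assumes q: "q \<ge> 2" and "digit_seq q d" "digit_seq q e"
  shows "\<bar>negaq q d - negaq q e\<bar> \<le> 1"
proof -
  have "1 / (real q + 1) - (- real q / (real q + 1)) = 1" using q by (simp add: field_simps)
  then show ?thesis
    using negaq_le_max(1)[OF q assms(2)] negaq_ge_min(1)[OF q assms(2)]
      negaq_le_max(1)[OF q assms(3)] negaq_ge_min(1)[OF q assms(3)] by linarith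
qed

definition avoids_extremal_prefix :: "nat \<Rightarrow> nat \<Rightarrow> (nat \<Rightarrow> nat) \<Rightarrow> bool" where
  "avoids_extremal_prefix q n d \<longleftrightarrow>
     stake n d \<noteq> stake n (negaq_max_digits q) \<and> stake n d \<noteq> stake n (negaq_min_digits q)"

lemma negaq_avoids_extremal_bounds:
  assumes "q \<ge> 2" "digit_seq q d" "avoids_extremal_prefix q n d"
  shows "- real q / (real q + 1) + 1 / real q ^ n \<le> negaq q d"
    and "negaq q d \<le> 1 / (real q + 1) - 1 / real q ^ n"
  using assms negaq_le_max(2) negaq_ge_min(2) by (auto simp: avoids_extremal_prefix_def)

text \<open>Two expansions that first differ at place \<open>k\<close> are far apart as soon as neither tail
  starts like an extremal expansion: the tails then lie in an interval shorter than \<open>1\<close> by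
  \<open>2 / q ^ n\<close>, while the differing digits contribute at least \<open>1\<close>.\<close>

lemma negaq_separated:
  assumes q: "q \<ge> 2" and d: "digit_seq q d" and e: "digit_seq q e"
    and agree: "stake k d = stake k e" and differ: "d k \<noteq> e k"
    and tails: "avoids_extremal_prefix q n (\<lambda>j. d (j + Suc k))"
               "avoids_extremal_prefix q n (\<lambda>j. e (j + Suc k))"
  shows "2 / real q ^ n * (1 / real q) ^ Suc k \<le> \<bar>negaq q d - negaq q e\<bar>"
proof -
  define \<rho> where "\<rho> = (1 / (- real q)) ^ Suc k"
  define Td where "Td = negaq q (\<lambda>j. d (j + Suc k))"
  define Te where "Te = negaq q (\<lambda>j. e (j + Suc k))"
  have sd: "negaq q d = (\<Sum>i<Suc k. real (d i) / (- real q) ^ Suc i) + \<rho> * Td"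
    using negaq_split[OF q d, of "Suc k"] unfolding Td_def \<rho>_def .
  have se: "negaq q e = (\<Sum>i<Suc k. real (e i) / (- real q) ^ Suc i) + \<rho> * Te"
    using negaq_split[OF q e, of "Suc k"] unfolding Te_def \<rho>_def .
  have "(\<Sum>i<Suc k. real (d i) / (- real q) ^ Suc i) - (\<Sum>i<Suc k. real (e i) / (- real q) ^ Suc i)
      = (\<Sum>i<Suc k. (real (d i) - real (e i)) / (- real q) ^ Suc i)"
    by (simp only: diff_divide_distrib sum_subtractf)
  also have "\<dots> = (real (d k) - real (e k)) / (- real q) ^ Suc k"
    using agree by (simp add: stake_eq_iff)
  also have "\<dots> = \<rho> * (real (d k) - real (e k))"
    unfolding \<rho>_def power_one_over by simp
  finally have diff: "negaq q d - negaq q e = \<rho> * ((real (d k) - real (e k)) + (Td - Te))"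
    using sd se by (simp add: algebra_simps)
  have "1 / (real q + 1) - (- real q / (real q + 1)) = 1" using q by (simp add: field_simps)
  then have "\<bar>Td - Te\<bar> \<le> 1 - 2 / real q ^ n"
    using negaq_avoids_extremal_bounds[OF q digit_seq_shift[OF d] tails(1)]
      negaq_avoids_extremal_bounds[OF q digit_seq_shift[OF e] tails(2)]
    unfolding Td_def Te_def by linarith
  moreover have "1 \<le> \<bar>real (d k) - real (e k)\<bar>" using differ by linarith
  ultimately have "2 / real q ^ n \<le> \<bar>(real (d k) - real (e k)) + (Td - Te)\<bar>" by linarith
  then have "\<bar>\<rho>\<bar> * (2 / real q ^ n) \<le> \<bar>\<rho>\<bar> * \<bar>(real (d k) - real (e k)) + (Td - Te)\<bar>"
    by (intro mult_left_mono) auto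
  moreover have "\<bar>\<rho>\<bar> = (1 / real q) ^ Suc k" by (simp add: \<rho>_def power_abs)
  ultimately show ?thesis unfolding diff abs_mult by (simp add: mult.commute)
qed

lemma avoids_extremal_prefix_pos:
  assumes "\<And>k. 1 \<le> d k"
  shows "avoids_extremal_prefix q 2 d"
  using assms[of 0] assms[of 1]
  by (auto simp: avoids_extremal_prefix_def stake_def negaq_max_digits_def negaq_min_digits_def
                 numeral_2_eq_2)

lemma avoids_extremal_prefix_mono:
  assumes "avoids_extremal_prefix q n d" "n \<le> n'"
  shows "avoids_extremal_prefix q n' d"
  using assms by (fastforce simp: avoids_extremal_prefix_def stake_eq_iff intro: order.strict_trans2)

section \<open>The sets \<open>E(h)\<close> and \<open>D(h)\<close>\<close>

lemma finite_Theta: "finite (Theta q u)"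
  by (simp add: Theta_def)

lemma Theta_ge_2:
  assumes "q > 3"
  obtains b where "b \<in> Theta q u" "2 \<le> b"
  using assms that[of 2] that[of 3] by (cases "u = 2") (auto simp: Theta_def)

lemma two_le_card_Theta:
  assumes "q > 3"
  shows "2 \<le> card (Theta q u)"
proof -
  obtain x y where "x \<in> Theta q u" "y \<in> Theta q u" "x \<noteq> y"
  proof (cases "u = 1")
    case True
    then show ?thesis using assms that[of 2 3] by (auto simp: Theta_def)
  next
    case False
    then show ?thesis
      using assms that[of 1 3] that[of 1 2] by (cases "u = 2") (auto simp: Theta_def)
  qed
  then have "card {x, y} \<le> card (Theta q u)" by (intro card_mono finite_Theta) auto
  then show ?thesis using \<open>x \<noteq> y\<close> by simp
qed

lemma digit_seq_codes_Theta: "\<alpha> \<in> codes (Theta q u) \<Longrightarrow> digit_seq q \<alpha>"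
  by (auto simp: digit_seq_def codes_def Theta_def)

lemma sum_Theta_pow_less_1:
  assumes q: "q > 3"
  shows "(\<Sum>a\<in>Theta q u. (1 / real q) ^ a) < 1"
proof -
  have "card (Theta q u) \<le> card {1..q-1}" by (intro card_mono) (auto simp: Theta_def)
  then have card: "card (Theta q u) \<le> q - 1" by simp
  have "(\<Sum>a\<in>Theta q u. (1 / real q) ^ a) \<le> card (Theta q u) * (1 / real q)"
    using q by (intro sum_bounded_above power_decreasing[of 1, simplified]) (auto simp: Theta_def)
  also have "\<dots> \<le> real (q - 1) * (1 / real q)" using card q by (intro mult_right_mono) auto
  also have "\<dots> < 1" using q by (simp add: of_nat_diff field_simps)
  finally show ?thesis .
qed

lemma separated_ifs_Eh:
  assumes q: "q > 3"
  shows "separated_ifs (Theta q u) (\<lambda>a. real a / - real q) (\<lambda>_. 1 / - real q) (negaq q) (2 / real q ^ 3) 1"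
proof
  show "finite (Theta q u)" "2 \<le> card (Theta q u)" using finite_Theta two_le_card_Theta[OF q] .
  show "1 / - real q \<noteq> 0" "\<bar>1 / - real q\<bar> < 1" "0 < 2 / real q ^ 3" using q by auto
  fix \<alpha> \<beta> :: "nat \<Rightarrow> nat" assume \<alpha>: "\<alpha> \<in> codes (Theta q u)" and \<beta>: "\<beta> \<in> codes (Theta q u)"
  show "\<bar>negaq q \<alpha> - negaq q \<beta>\<bar> \<le> 1"
    using q by (intro negaq_dist_le_1 digit_seq_codes_Theta[OF \<alpha>] digit_seq_codes_Theta[OF \<beta>]) auto
  assume "\<alpha> 0 \<noteq> \<beta> 0"
  moreover have avoid: "avoids_extremal_prefix q 2 (\<lambda>j. \<gamma> (j + Suc 0))"
    if "\<gamma> \<in> codes (Theta q u)" for \<gamma>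
    using that by (intro avoids_extremal_prefix_pos) (auto simp: codes_def Theta_def)
  ultimately have "2 / real q ^ 2 * (1 / real q) ^ Suc 0 \<le> \<bar>negaq q \<alpha> - negaq q \<beta>\<bar>"
    using q by (intro negaq_separated digit_seq_codes_Theta[OF \<alpha>] digit_seq_codes_Theta[OF \<beta>]
                      avoid[OF \<alpha>] avoid[OF \<beta>]) (auto simp: stake_def)
  then show "2 / real q ^ 3 \<le> \<bar>negaq q \<alpha> - negaq q \<beta>\<bar>"
    by (simp add: power_Suc field_simps eval_nat_numeral)
next
  fix a \<alpha> assume "a \<in> Theta q u" "\<alpha> \<in> codes (Theta q u)"
  then have "digit_seq q (case_nat a \<alpha>)"
    by (intro digit_seq_codes_Theta codes_case_nat)
  then show "negaq q (case_nat a \<alpha>) = real a / - real q + 1 / - real q * negaq q \<alpha>"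
    using negaq_split[of q _ 1] q by simp
qed

lemma psum_Suc: "psum \<alpha> (Suc n) = psum \<alpha> n + \<alpha> n"
  by (simp add: psum_def)

lemma psum_case_nat: "psum (case_nat a \<alpha>) (Suc n) = a + psum \<alpha> n"
  unfolding psum_def by (subst sum.lessThan_Suc_shift) simp

lemma psum_Suc_inj:
  assumes "\<And>n. 1 \<le> \<alpha> n" "psum \<alpha> (Suc m) = psum \<alpha> (Suc n)"
  shows "m = n"
proof -
  have "psum \<alpha> (Suc n) < psum \<alpha> (Suc (Suc n))" for n
    using assms(1)[of "Suc n"] by (simp add: psum_Suc[of _ "Suc n"])
  then have "strict_mono (\<lambda>n. psum \<alpha> (Suc n))" by (simp add: strict_mono_Suc_iff)
  then show ?thesis using assms(2) strict_mono_eq by blast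
qed

lemma blockdigits_psum:
  assumes "\<And>n. 1 \<le> \<alpha> n" "Suc k = psum \<alpha> (Suc n)"
  shows "blockdigits u \<alpha> k = \<alpha> n"
proof -
  have "(THE m. Suc k = psum \<alpha> (Suc m)) = n"
    using assms psum_Suc_inj[OF assms(1)] by (intro the_equality) auto
  then show ?thesis using assms(2) unfolding blockdigits_def by auto
qed

lemma blockdigits_not_psum: "(\<And>n. Suc k \<noteq> psum \<alpha> (Suc n)) \<Longrightarrow> blockdigits u \<alpha> k = u"
  unfolding blockdigits_def by auto

definition block :: "nat \<Rightarrow> nat \<Rightarrow> nat list" where
  "block u a = replicate (a - 1) u @ [a]"

lemma length_block [simp]: "1 \<le> a \<Longrightarrow> length (block u a) = a"
  by (simp add: block_def)

lemma blockdigits_case_nat_tail: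
  assumes a: "1 \<le> a" and pos: "\<And>n. 1 \<le> \<alpha> n" and k: "a \<le> k"
  shows "blockdigits u (case_nat a \<alpha>) k = blockdigits u \<alpha> (k - a)"
proof -
  define \<beta> where "\<beta> = case_nat a \<alpha>"
  have pos\<beta>: "1 \<le> \<beta> n" for n using a pos by (simp add: \<beta>_def split: nat.split)
  have psum\<beta>: "psum \<beta> (Suc n) = a + psum \<alpha> n" for n unfolding \<beta>_def by (rule psum_case_nat)
  show ?thesis
  proof (cases "\<exists>n. Suc (k - a) = psum \<alpha> (Suc n)")
    case True
    then obtain n where n: "Suc (k - a) = psum \<alpha> (Suc n)" by blast
    then have "Suc k = psum \<beta> (Suc (Suc n))" using k by (simp add: psum\<beta>)
    then show ?thesis
      using blockdigits_psum[OF pos\<beta>] blockdigits_psum[OF pos n] by (simp add: \<beta>_def)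
  next
    case False
    have "Suc k \<noteq> psum \<beta> (Suc n)" for n
    proof (cases n)
      case 0
      then show ?thesis using k by (simp add: psum_def \<beta>_def)
    next
      case (Suc m)
      have "Suc (k - a) \<noteq> psum \<alpha> (Suc m)" using False by blast
      then show ?thesis unfolding Suc psum\<beta> using k by linarith
    qed
    then show ?thesis using False blockdigits_not_psum unfolding \<beta>_def by metis
  qed
qed

lemma blockdigits_case_nat:
  assumes a: "1 \<le> a" and pos: "\<And>n. 1 \<le> \<alpha> n"
  shows "blockdigits u (case_nat a \<alpha>) = prepend (block u a) (blockdigits u \<alpha>)"
proof
  fix k
  have psum: "psum (case_nat a \<alpha>) (Suc n) = a + psum \<alpha> n" for n by (rule psum_case_nat)
  consider "k = a - 1" | "k < a - 1" | "a \<le> k" by linarith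
  then show "blockdigits u (case_nat a \<alpha>) k = prepend (block u a) (blockdigits u \<alpha>) k"
  proof cases
    case 1
    then have "Suc k = psum (case_nat a \<alpha>) (Suc 0)" using a by (simp add: psum_def)
    then show ?thesis
      using blockdigits_psum[of "case_nat a \<alpha>"] a pos 1
      by (simp add: block_def nth_append split: nat.split)
  next
    case 2
    then have "Suc k \<noteq> psum (case_nat a \<alpha>) (Suc n)" for n by (simp add: psum)
    then show ?thesis
      using blockdigits_not_psum 2 by (simp add: block_def nth_append)
  next
    case 3
    then show ?thesis using blockdigits_case_nat_tail[OF a pos 3] a by (simp add: prepend_def)
  qed
qed

lemma blockdigits_in: "\<alpha> \<in> codes (Theta q u) \<Longrightarrow> blockdigits u \<alpha> k \<in> insert u (Theta q u)"
  unfolding blockdigits_def codes_def by auto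

lemma digit_seq_blockdigits:
  assumes "\<alpha> \<in> codes (Theta q u)" "u < q"
  shows "digit_seq q (blockdigits u \<alpha>)"
  unfolding digit_seq_def
proof
  fix k
  show "blockdigits u \<alpha> k \<le> q - 1"
    using blockdigits_in[OF assms(1), of k] assms(2) by (auto simp: Theta_def)
qed

lemma codes_Theta_pos: "\<alpha> \<in> codes (Theta q u) \<Longrightarrow> 1 \<le> \<alpha> n"
  by (auto simp: codes_def Theta_def)

text \<open>Every digit \<open>a \<noteq> u\<close> ends a block, so it is preceded by \<open>a - 1\<close> copies of \<open>u\<close>.\<close>

lemma blockdigits_block_before:
  assumes "\<And>n. 1 \<le> \<alpha> n" "blockdigits u \<alpha> k = a" "a \<noteq> u"
  shows "a - 1 \<le> k \<and> (\<forall>j. k - (a - 1) \<le> j \<and> j < k \<longrightarrow> blockdigits u \<alpha> j = u)"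
  using assms
proof (induction k arbitrary: \<alpha> rule: less_induct)
  case (less k)
  define \<alpha>' where "\<alpha>' n = \<alpha> (Suc n)" for n
  have pos: "1 \<le> \<alpha>' n" "1 \<le> \<alpha> 0" for n using less.prems(1) by (simp_all add: \<alpha>'_def)
  have "case_nat (\<alpha> 0) \<alpha>' = \<alpha>" unfolding \<alpha>'_def by (rule case_nat_head_tail)
  then have "blockdigits u \<alpha> = prepend (block u (\<alpha> 0)) (blockdigits u \<alpha>')"
    using blockdigits_case_nat[OF pos(2), of \<alpha>' u] pos(1) by simp
  then have digits: "blockdigits u \<alpha> j = prepend (block u (\<alpha> 0)) (blockdigits u \<alpha>') j" for j
    by simp
  show ?case
  proof (cases "k < \<alpha> 0")
    case True
    then have "k = \<alpha> 0 - 1" "a = \<alpha> 0"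
      using less.prems(2,3) digits[of k] pos(2)
      by (auto simp: block_def nth_append split: if_splits)
    then show ?thesis
      using digits pos(2) by (auto simp: block_def nth_append)
  next
    case False
    then have tail: "blockdigits u \<alpha>' (k - \<alpha> 0) = a"
      using less.prems(2) digits[of k] pos(2) by (simp add: prepend_def)
    have "k - \<alpha> 0 < k" using False pos(2) by simp
    from less.IH[OF this pos(1) tail less.prems(3)]
    have ih: "a - 1 \<le> k - \<alpha> 0" "\<forall>j. k - \<alpha> 0 - (a - 1) \<le> j \<and> j < k - \<alpha> 0 \<longrightarrow> blockdigits u \<alpha>' j = u"
      by auto
    show ?thesis
    proof (intro conjI allI impI)
      show "a - 1 \<le> k" using ih(1) by simp
      fix j assume j: "k - (a - 1) \<le> j \<and> j < k"
      then have "\<alpha> 0 \<le> j" using ih(1) False by linarith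
      then have "blockdigits u \<alpha> j = blockdigits u \<alpha>' (j - \<alpha> 0)"
        using digits[of j] pos(2) by (simp add: prepend_def)
      also have "\<dots> = u" using ih(2) j \<open>\<alpha> 0 \<le> j\<close> False by (intro ih(2)[rule_format]) linarith
      finally show "blockdigits u \<alpha> j = u" .
    qed
  qed
qed

text \<open>For \<open>u = 0\<close> the extremal patterns \<open>0 (q-1) 0 (q-1)\<close> and \<open>(q-1) 0 (q-1) 0\<close> would need a
  digit \<open>q - 1\<close> preceded by fewer than \<open>q - 2 \<ge> 2\<close> zeros; for \<open>u \<noteq> 0\<close> no digit is \<open>0\<close>.\<close>

lemma blockdigits_avoids_extremal_prefix:
  assumes q: "q > 3" and \<alpha>: "\<alpha> \<in> codes (Theta q u)"
  shows "avoids_extremal_prefix q 4 (\<lambda>j. blockdigits u \<alpha> (j + m))"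
proof (cases "u = 0")
  case False
  have "1 \<le> blockdigits u \<alpha> k" for k using blockdigits_in[OF \<alpha>, of k] False by (auto simp: Theta_def)
  then have "avoids_extremal_prefix q 2 (\<lambda>j. blockdigits u \<alpha> (j + m))"
    by (intro avoids_extremal_prefix_pos)
  then show ?thesis by (rule avoids_extremal_prefix_mono) simp
next
  case True
  have block: "blockdigits 0 \<alpha> j = 0" if "blockdigits 0 \<alpha> k = q - 1" "k - (q - 2) \<le> j" "j < k" for j k
    using blockdigits_block_before[OF codes_Theta_pos[OF \<alpha>] that(1)] that q True by auto
  have "stake 4 (\<lambda>j. blockdigits 0 \<alpha> (j + m)) \<noteq> stake 4 (negaq_max_digits q)"
  proof
    assume "stake 4 (\<lambda>j. blockdigits 0 \<alpha> (j + m)) = stake 4 (negaq_max_digits q)"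
    then have "blockdigits 0 \<alpha> (3 + m) = q - 1" "blockdigits 0 \<alpha> (1 + m) = q - 1"
      unfolding stake_eq_iff by (auto simp: negaq_max_digits_def dest: spec[of _ 3] spec[of _ 1])
    moreover have "3 + m - (q - 2) \<le> 1 + m" using q by arith
    ultimately show False using block[where k="3 + m" and j="1 + m"] q by simp
  qed
  moreover have "stake 4 (\<lambda>j. blockdigits 0 \<alpha> (j + m)) \<noteq> stake 4 (negaq_min_digits q)"
  proof
    assume "stake 4 (\<lambda>j. blockdigits 0 \<alpha> (j + m)) = stake 4 (negaq_min_digits q)"
    then have "blockdigits 0 \<alpha> (2 + m) = q - 1" "blockdigits 0 \<alpha> (0 + m) = q - 1"
      unfolding stake_eq_iff by (auto simp: negaq_min_digits_def dest: spec[of _ 2] spec[of _ 0])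
    moreover have "2 + m - (q - 2) \<le> 0 + m" using q by arith
    ultimately show False using block[where k="2 + m" and j="0 + m"] q by simp
  qed
  ultimately show ?thesis using True by (simp add: avoids_extremal_prefix_def)
qed

text \<open>For \<open>a = \<alpha> 0 < \<beta> 0\<close> the digit sequences first differ at the last place \<open>a - 1\<close> of the
  first block of \<open>\<alpha>\<close>.\<close>

lemma negaq_blockdigits_gap:
  assumes q: "q > 3" and u: "u < q"
    and \<alpha>: "\<alpha> \<in> codes (Theta q u)" and \<beta>: "\<beta> \<in> codes (Theta q u)" and less: "\<alpha> 0 < \<beta> 0"
  shows "2 / real q ^ 4 * (1 / real q) ^ (q - 1) \<le> \<bar>negaq q (blockdigits u \<alpha>) - negaq q (blockdigits u \<beta>)\<bar>"
proof -
  define a b where "a = \<alpha> 0" and "b = \<beta> 0"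
  have a: "1 \<le> a" "a \<le> q - 1" "a \<noteq> u" using \<alpha> by (auto simp: a_def codes_def Theta_def)
  have "1 \<le> b" using \<beta> by (auto simp: b_def codes_def Theta_def)
  have digits: "blockdigits u \<gamma> = prepend (block u (\<gamma> 0)) (blockdigits u (\<lambda>n. \<gamma> (Suc n)))"
    if "\<gamma> \<in> codes (Theta q u)" for \<gamma>
    using blockdigits_case_nat[of "\<gamma> 0" "\<lambda>n. \<gamma> (Suc n)" u] codes_Theta_pos[OF that]
    by (simp add: case_nat_head_tail)
  have "2 / real q ^ 4 * (1 / real q) ^ Suc (a - 1)
      \<le> \<bar>negaq q (blockdigits u \<alpha>) - negaq q (blockdigits u \<beta>)\<bar>"
  proof (rule negaq_separated)
    show "stake (a - 1) (blockdigits u \<alpha>) = stake (a - 1) (blockdigits u \<beta>)"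
      using less \<open>1 \<le> b\<close> unfolding digits[OF \<alpha>] digits[OF \<beta>] a_def b_def
      by (auto simp: stake_eq_iff block_def nth_append)
    show "blockdigits u \<alpha> (a - 1) \<noteq> blockdigits u \<beta> (a - 1)"
      using less a \<open>1 \<le> b\<close> unfolding digits[OF \<alpha>] digits[OF \<beta>] a_def b_def
      by (auto simp: block_def nth_append)
  qed (use q u \<alpha> \<beta> blockdigits_avoids_extremal_prefix[OF q \<alpha>, of "Suc (a - 1)"]
         blockdigits_avoids_extremal_prefix[OF q \<beta>, of "Suc (a - 1)"]
       in \<open>auto intro: digit_seq_blockdigits\<close>)
  moreover have "(1 / real q) ^ (q - 1) \<le> (1 / real q) ^ Suc (a - 1)"
    using q a by (intro power_decreasing) auto
  ultimately show ?thesis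
    by (smt (verit) divide_nonneg_nonneg mult_left_mono of_nat_0_le_iff zero_le_power)
qed

lemma separated_ifs_Dh:
  assumes q: "q > 3" and u: "u < q"
  shows "separated_ifs (Theta q u) (\<lambda>a. \<Sum>k<a. real (block u a ! k) / (- real q) ^ Suc k)
           (\<lambda>a. (1 / - real q) ^ a) (\<lambda>\<alpha>. negaq q (blockdigits u \<alpha>))
           (2 / real q ^ 4 * (1 / real q) ^ (q - 1)) 1"
proof
  show "finite (Theta q u)" "2 \<le> card (Theta q u)" using finite_Theta two_le_card_Theta[OF q] .
  show "0 < 2 / real q ^ 4 * (1 / real q) ^ (q - 1)" using q by simp
  fix a assume a: "a \<in> Theta q u"
  then show "(1 / - real q) ^ a \<noteq> 0" "\<bar>(1 / - real q) ^ a\<bar> < 1"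
    using q by (auto simp: power_abs Theta_def power_less_one_iff)
  fix \<alpha> assume \<alpha>: "\<alpha> \<in> codes (Theta q u)"
  have a1: "1 \<le> a" using a by (simp add: Theta_def)
  have digits: "blockdigits u (case_nat a \<alpha>) = prepend (block u a) (blockdigits u \<alpha>)"
    using blockdigits_case_nat[OF a1] codes_Theta_pos[OF \<alpha>] by blast
  have "digit_seq q (prepend (block u a) (blockdigits u \<alpha>))"
    using digit_seq_blockdigits[OF codes_case_nat[OF a \<alpha>] u] unfolding digits .
  moreover have "(\<lambda>k. prepend (block u a) (blockdigits u \<alpha>) (k + a)) = blockdigits u \<alpha>"
    using prepend_shift[of "block u a"] a1 by simp
  ultimately show "negaq q (blockdigits u (case_nat a \<alpha>))
      = (\<Sum>k<a. real (block u a ! k) / (- real q) ^ Suc k) + (1 / - real q) ^ a * negaq q (blockdigits u \<alpha>)"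
    using negaq_split[of q _ a] q unfolding digits by simp
next
  fix \<alpha> \<beta> assume \<alpha>: "\<alpha> \<in> codes (Theta q u)" and \<beta>: "\<beta> \<in> codes (Theta q u)"
  show "\<bar>negaq q (blockdigits u \<alpha>) - negaq q (blockdigits u \<beta>)\<bar> \<le> 1"
    using q by (intro negaq_dist_le_1 digit_seq_blockdigits \<alpha> \<beta> u) auto
  assume "\<alpha> 0 \<noteq> \<beta> 0"
  then consider "\<alpha> 0 < \<beta> 0" | "\<beta> 0 < \<alpha> 0" by linarith
  then show "2 / real q ^ 4 * (1 / real q) ^ (q - 1)
      \<le> \<bar>negaq q (blockdigits u \<alpha>) - negaq q (blockdigits u \<beta>)\<bar>"
    by cases (use negaq_blockdigits_gap[OF q u \<alpha> \<beta>] negaq_blockdigits_gap[OF q u \<beta> \<alpha>] in \<open>auto simp: abs_minus_commute\<close>)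
qed

context
  fixes q u :: nat
  assumes q: "q > 3" and u: "u < q"
begin

interpretation D: separated_ifs "Theta q u" "\<lambda>a. \<Sum>k<a. real (block u a ! k) / (- real q) ^ Suc k"
    "\<lambda>a. (1 / - real q) ^ a" "\<lambda>\<alpha>. negaq q (blockdigits u \<alpha>)" "2 / real q ^ 4 * (1 / real q) ^ (q - 1)" 1
  by (rule separated_ifs_Dh[OF q u])

interpretation E: separated_ifs "Theta q u" "\<lambda>a. real a / - real q" "\<lambda>_. 1 / - real q" "negaq q"
    "2 / real q ^ 3" 1
  by (rule separated_ifs_Eh[OF q])

lemma attractor_eq_Dh: "D.attractor = Dh q u"
  by (auto simp: D.attractor_def Dh_def codes_def)

lemma attractor_eq_Eh: "E.attractor = Eh q u"
  by (auto simp: E.attractor_def Eh_def codes_def)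

lemma sum_factor_Dh_less_1: "(\<Sum>a\<in>Theta q u. \<bar>(1 / - real q) ^ a\<bar>) < 1"
  using sum_Theta_pow_less_1[OF q] by (simp add: power_abs)

lemma uncountable_Dh: "uncountable (Dh q u)"
  using D.uncountable_attractor unfolding attractor_eq_Dh .

lemma perfect_set_Dh: "perfect_set (Dh q u)"
  using D.perfect_attractor unfolding attractor_eq_Dh .

lemma nowhere_dense_Dh: "nowhere_dense (Dh q u)"
  using D.nowhere_dense_attractor[OF sum_factor_Dh_less_1] unfolding attractor_eq_Dh .

lemma null_sets_Dh: "Dh q u \<in> null_sets lebesgue"
  using D.attractor_null[OF sum_factor_Dh_less_1] unfolding attractor_eq_Dh .

lemma self_similar_Dh: "self_similar (Dh q u)"
  using D.self_similar_attractor unfolding attractor_eq_Dh .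

lemma moran_equation_Dh: "(\<Sum>a\<in>Theta q u. ((1 / real q) ^ a) powr hausdorff_dim (Dh q u)) = 1"
proof -
  obtain s where s: "0 < s" "(\<Sum>a\<in>Theta q u. \<bar>(1 / - real q) ^ a\<bar> powr s) = 1"
    using D.similarity_dimension_exists[OF sum_factor_Dh_less_1] by blast
  moreover have "hausdorff_dim (Dh q u) = s"
    using D.hausdorff_dim_attractor[OF s] unfolding attractor_eq_Dh .
  ultimately show ?thesis by (simp add: power_abs)
qed

lemma self_similar_Eh: "self_similar (Eh q u)"
  using E.self_similar_attractor unfolding attractor_eq_Eh .

lemma log_card_Theta_pos: "0 < log (real q) (real (card (Theta q u)))"
  using q two_le_card_Theta[OF q, of u] by simp

lemma moran_equation_Eh:
  "(\<Sum>a\<in>Theta q u. (1 / real q) powr log (real q) (real (card (Theta q u)))) = 1"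
  using q by (intro sum_uniform_powr_log E.letters_nonempty finite_Theta) simp

lemma hausdorff_dim_Eh: "hausdorff_dim (Eh q u) = log (real q) (real (card (Theta q u)))"
  using E.hausdorff_dim_attractor[OF log_card_Theta_pos] moran_equation_Eh
  unfolding attractor_eq_Eh by simp

lemma hausdorff_dim_Dh_less_Eh: "hausdorff_dim (Dh q u) < hausdorff_dim (Eh q u)"
proof -
  obtain b where b: "b \<in> Theta q u" "2 \<le> b" using Theta_ge_2[OF q] .
  show ?thesis
    unfolding hausdorff_dim_Eh
  proof (rule moran_solution_less[where f="\<lambda>a. (1 / real q) ^ a" and g="\<lambda>_. 1 / real q"])
    show "0 < (1 / real q) ^ a \<and> (1 / real q) ^ a \<le> 1 / real q \<and> 1 / real q < 1"
      if "a \<in> Theta q u" for a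
      using that q power_decreasing[of 1 a "1 / real q"] by (auto simp: Theta_def)
    show "(1 / real q) ^ b < 1 / real q"
      using b(2) q power_strict_decreasing[of 1 b "1 / real q"] by simp
  qed (use finite_Theta b(1) moran_equation_Dh moran_equation_Eh log_card_Theta_pos in auto)
qed

end

theorem theorem3p1:
  fixes q u :: nat
  assumes "q > 3" and "u < q"
  shows "(uncountable (Dh q u) \<and> perfect_set (Dh q u) \<and> nowhere_dense (Dh q u)
          \<and> Dh q u \<in> null_sets lebesgue \<and> self_similar (Dh q u)
          \<and> (\<Sum>p\<in>Theta q u. (1 / real q) powr (real p * hausdorff_dim (Dh q u))) = 1)
       \<and> (self_similar (Eh q u) \<and> hausdorff_dim (Eh q u) = log (real q) (real (card (Theta q u))))
       \<and> hausdorff_dim (Dh q u) \<noteq> hausdorff_dim (Eh q u)"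
proof -
  have "(1 / real q) powr (real p * hausdorff_dim (Dh q u))
      = ((1 / real q) ^ p) powr hausdorff_dim (Dh q u)" for p
    using assms(1) by (simp add: powr_realpow[symmetric] powr_powr)
  then show ?thesis
    using uncountable_Dh[OF assms] perfect_set_Dh[OF assms] nowhere_dense_Dh[OF assms]
      null_sets_Dh[OF assms] self_similar_Dh[OF assms] moran_equation_Dh[OF assms]
      self_similar_Eh[OF assms] hausdorff_dim_Eh[OF assms] hausdorff_dim_Dh_less_Eh[OF assms]
    by simp
qed

end
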